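(* Let $(G,P,\Delta)$ be a Garside structure of finite type on $G$ and let $S$ be the set of non-trivial simple elements. Then $Flag(G,S)$ is systolic if and only if for all $a,b\in S$ one has $a\wedge_L b\in\{e,a,b\}$ and $a\wedge_R b\in\{e,a,b\}$. In particular, if $Flag(G,S)$ is systolic then $G$ is a systolic group.
   Context: A Garside structure $(G,P,\Delta)$ on a group $G$ consists of a submonoid $P$ with $P\cap P^{-1}=\{e\}$ and an element $\Delta\in P$ such that: (i) the partial order $a\le_L b\iff a^{-1}b\in P$ is a lattice order on $G$; (ii) the set of simple elements $[e,\Delta]=\{a\in G\mid e\le_L a\le_L\Delta\}$ generates $P$; (iii) $\Delta^{-1}P\Delta=P$; (iv) for every $x\in P\setminus\{e\}$, $\sup\{k\mid x=a_1\cdots a_k,\ a_i\in P\setminus\{e\}\}<\infty$. It is of finite type if $[e,\Delta]$ is finite. The order $a\le_R b\iff ba^{-1}\in P$ is also a lattice order, and $[e,\Delta]=\{a\mid e\le_R a\le_R\Delta\}$. $a\wedge_L b$ and $a\wedge_R b$ denote the greatest lower bounds for $\le_L$ and $\le_R$. For a finite generating set $S$ with $S\cap S^{-1}=\emptyset$, $Flag(G,S)$ is the flag complex of the Cayley graph (vertices $g\in G$, edges between $g$ and $gs$, $s\in S$). A simplicial complex is systolic if it is connected, simply connected and the link of every vertex is flag and $6$-large ($6$-large: every embedded cycle of length $4$ or $5$ has a diagonal). A group is systolic if it acts properly discontinuously and cocompactly on a systolic complex. *)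

theory Defs
  imports "HOL-Algebra.Group_Action"
begin

definition leL :: "('a, 'b) monoid_scheme \<Rightarrow> 'a set \<Rightarrow> 'a \<Rightarrow> 'a \<Rightarrow> bool" where
  "leL G P a b \<longleftrightarrow> inv\<^bsub>G\<^esub> a \<otimes>\<^bsub>G\<^esub> b \<in> P"

definition leR :: "('a, 'b) monoid_scheme \<Rightarrow> 'a set \<Rightarrow> 'a \<Rightarrow> 'a \<Rightarrow> bool" where
  "leR G P a b \<longleftrightarrow> b \<otimes>\<^bsub>G\<^esub> inv\<^bsub>G\<^esub> a \<in> P"

definition is_glb_on :: "'a set \<Rightarrow> ('a \<Rightarrow> 'a \<Rightarrow> bool) \<Rightarrow> 'a \<Rightarrow> 'a \<Rightarrow> 'a \<Rightarrow> bool" where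
  "is_glb_on A rel a b m \<longleftrightarrow> m \<in> A \<and> rel m a \<and> rel m b \<and>
     (\<forall>c\<in>A. rel c a \<and> rel c b \<longrightarrow> rel c m)"

definition is_lub_on :: "'a set \<Rightarrow> ('a \<Rightarrow> 'a \<Rightarrow> bool) \<Rightarrow> 'a \<Rightarrow> 'a \<Rightarrow> 'a \<Rightarrow> bool" where
  "is_lub_on A rel a b m \<longleftrightarrow> m \<in> A \<and> rel a m \<and> rel b m \<and>
     (\<forall>c\<in>A. rel a c \<and> rel b c \<longrightarrow> rel m c)"

definition lattice_order_on :: "'a set \<Rightarrow> ('a \<Rightarrow> 'a \<Rightarrow> bool) \<Rightarrow> bool" where
  "lattice_order_on A rel \<longleftrightarrow>
     (\<forall>a\<in>A. rel a a) \<and>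
     (\<forall>a\<in>A. \<forall>b\<in>A. rel a b \<and> rel b a \<longrightarrow> a = b) \<and>
     (\<forall>a\<in>A. \<forall>b\<in>A. \<forall>c\<in>A. rel a b \<and> rel b c \<longrightarrow> rel a c) \<and>
     (\<forall>a\<in>A. \<forall>b\<in>A. (\<exists>m. is_glb_on A rel a b m) \<and> (\<exists>m. is_lub_on A rel a b m))"

definition meetL :: "('a, 'b) monoid_scheme \<Rightarrow> 'a set \<Rightarrow> 'a \<Rightarrow> 'a \<Rightarrow> 'a" where
  "meetL G P a b = (THE m. is_glb_on (carrier G) (leL G P) a b m)"

definition meetR :: "('a, 'b) monoid_scheme \<Rightarrow> 'a set \<Rightarrow> 'a \<Rightarrow> 'a \<Rightarrow> 'a" where
  "meetR G P a b = (THE m. is_glb_on (carrier G) (leR G P) a b m)"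

definition listprod :: "('a, 'b) monoid_scheme \<Rightarrow> 'a list \<Rightarrow> 'a" where
  "listprod G xs = foldr (\<lambda>x y. x \<otimes>\<^bsub>G\<^esub> y) xs \<one>\<^bsub>G\<^esub>"

definition simples :: "('a, 'b) monoid_scheme \<Rightarrow> 'a set \<Rightarrow> 'a \<Rightarrow> 'a set" where
  "simples G P \<Delta> = {a \<in> carrier G. leL G P \<one>\<^bsub>G\<^esub> a \<and> leL G P a \<Delta>}"

definition garside_structure :: "('a, 'b) monoid_scheme \<Rightarrow> 'a set \<Rightarrow> 'a \<Rightarrow> bool" where
  "garside_structure G P \<Delta> \<longleftrightarrow>
     group G \<and> P \<subseteq> carrier G \<and> \<one>\<^bsub>G\<^esub> \<in> P \<and>
     (\<forall>x\<in>P. \<forall>y\<in>P. x \<otimes>\<^bsub>G\<^esub> y \<in> P) \<and>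
     {x \<in> P. inv\<^bsub>G\<^esub> x \<in> P} = {\<one>\<^bsub>G\<^esub>} \<and>
     \<Delta> \<in> P \<and>
     lattice_order_on (carrier G) (leL G P) \<and>
     P = {listprod G xs | xs. set xs \<subseteq> simples G P \<Delta>} \<and>
     (\<lambda>x. inv\<^bsub>G\<^esub> \<Delta> \<otimes>\<^bsub>G\<^esub> x \<otimes>\<^bsub>G\<^esub> \<Delta>) ` P = P \<and>
     (\<forall>x \<in> P - {\<one>\<^bsub>G\<^esub>}. \<exists>N::nat. \<forall>xs. set xs \<subseteq> P - {\<one>\<^bsub>G\<^esub>} \<and> listprod G xs = x
         \<longrightarrow> length xs \<le> N)"

definition garside_finite_type :: "('a, 'b) monoid_scheme \<Rightarrow> 'a set \<Rightarrow> 'a \<Rightarrow> bool" where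
  "garside_finite_type G P \<Delta> \<longleftrightarrow> garside_structure G P \<Delta> \<and> finite (simples G P \<Delta>)"

definition simplicial_complex :: "'v set set \<Rightarrow> bool" where
  "simplicial_complex X \<longleftrightarrow>
     (\<forall>\<sigma>\<in>X. finite \<sigma> \<and> \<sigma> \<noteq> {} \<and> (\<forall>\<tau>. \<tau> \<subseteq> \<sigma> \<and> \<tau> \<noteq> {} \<longrightarrow> \<tau> \<in> X))"

definition verts :: "'v set set \<Rightarrow> 'v set" where
  "verts X = \<Union>X"

definition is_edge :: "'v set set \<Rightarrow> 'v \<Rightarrow> 'v \<Rightarrow> bool" where
  "is_edge X u v \<longleftrightarrow> u \<noteq> v \<and> {u, v} \<in> X"

text \<open>Edge paths: nonempty vertex lists whose consecutive entries are equal or adjacent.\<close>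
definition edge_path :: "'v set set \<Rightarrow> 'v list \<Rightarrow> bool" where
  "edge_path X p \<longleftrightarrow> p \<noteq> [] \<and> set p \<subseteq> verts X \<and>
     (\<forall>i. Suc i < length p \<longrightarrow> {p ! i, p ! Suc i} \<in> X)"

definition connected_complex :: "'v set set \<Rightarrow> bool" where
  "connected_complex X \<longleftrightarrow> verts X \<noteq> {} \<and>
     (\<forall>u\<in>verts X. \<forall>v\<in>verts X. \<exists>p. edge_path X p \<and> hd p = u \<and> last p = v)"

inductive path_move :: "'v set set \<Rightarrow> 'v list \<Rightarrow> 'v list \<Rightarrow> bool" for X where
  stutter: "path_move X (xs @ [u, u] @ ys) (xs @ [u] @ ys)"
| triangle: "{u, v, w} \<in> X \<Longrightarrow> path_move X (xs @ [u, v, w] @ ys) (xs @ [u, w] @ ys)"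

definition path_equiv :: "'v set set \<Rightarrow> 'v list \<Rightarrow> 'v list \<Rightarrow> bool" where
  "path_equiv X = (\<lambda>p q. path_move X p q \<or> path_move X q p)\<^sup>*\<^sup>*"

definition simply_connected_complex :: "'v set set \<Rightarrow> bool" where
  "simply_connected_complex X \<longleftrightarrow> connected_complex X \<and>
     (\<forall>p. edge_path X p \<and> hd p = last p \<longrightarrow> path_equiv X p [hd p])"

definition link :: "'v set set \<Rightarrow> 'v \<Rightarrow> 'v set set" where
  "link X v = {\<tau> \<in> X. v \<notin> \<tau> \<and> insert v \<tau> \<in> X}"

definition flag_complex_prop :: "'v set set \<Rightarrow> bool" where
  "flag_complex_prop X \<longleftrightarrow>
     (\<forall>\<sigma>. finite \<sigma> \<and> \<sigma> \<noteq> {} \<and> \<sigma> \<subseteq> verts X \<and>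
        (\<forall>u\<in>\<sigma>. \<forall>v\<in>\<sigma>. u \<noteq> v \<longrightarrow> is_edge X u v) \<longrightarrow> \<sigma> \<in> X)"

definition six_large :: "'v set set \<Rightarrow> bool" where
  "six_large X \<longleftrightarrow>
     (\<forall>k\<in>{4, 5::nat}. \<forall>c::nat \<Rightarrow> 'v.
        inj_on c {..<k} \<and> (\<forall>i<k. is_edge X (c i) (c ((i + 1) mod k))) \<longrightarrow>
        (\<exists>i<k. \<exists>j<k. j \<noteq> (i + 1) mod k \<and> i \<noteq> (j + 1) mod k \<and> i \<noteq> j \<and>
            is_edge X (c i) (c j)))"

definition systolic_complex :: "'v set set \<Rightarrow> bool" where
  "systolic_complex X \<longleftrightarrow> simplicial_complex X \<and> connected_complex X \<and>
     simply_connected_complex X \<and>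
     (\<forall>v\<in>verts X. flag_complex_prop (link X v) \<and> six_large (link X v))"

definition cayley_adj :: "('a, 'b) monoid_scheme \<Rightarrow> 'a set \<Rightarrow> 'a \<Rightarrow> 'a \<Rightarrow> bool" where
  "cayley_adj G S g h \<longleftrightarrow> (\<exists>s\<in>S. h = g \<otimes>\<^bsub>G\<^esub> s \<or> g = h \<otimes>\<^bsub>G\<^esub> s)"

definition Flag :: "('a, 'b) monoid_scheme \<Rightarrow> 'a set \<Rightarrow> 'a set set" where
  "Flag G S = {\<sigma>. finite \<sigma> \<and> \<sigma> \<noteq> {} \<and> \<sigma> \<subseteq> carrier G \<and>
      (\<forall>g\<in>\<sigma>. \<forall>h\<in>\<sigma>. g \<noteq> h \<longrightarrow> cayley_adj G S g h)}"

definition geometric_simplicial_action ::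
  "('a, 'b) monoid_scheme \<Rightarrow> 'v set set \<Rightarrow> ('a \<Rightarrow> 'v \<Rightarrow> 'v) \<Rightarrow> bool" where
  "geometric_simplicial_action G X \<phi> \<longleftrightarrow>
     group_action G (verts X) \<phi> \<and>
     (\<forall>g\<in>carrier G. \<forall>\<sigma>\<in>X. \<phi> g ` \<sigma> \<in> X) \<and>
     (\<forall>F. finite F \<and> F \<subseteq> verts X \<longrightarrow> finite {g \<in> carrier G. \<phi> g ` F \<inter> F \<noteq> {}}) \<and>
     (\<exists>K. finite K \<and> K \<subseteq> X \<and> (\<forall>\<sigma>\<in>X. \<exists>g\<in>carrier G. \<exists>\<tau>\<in>K. \<sigma> \<subseteq> \<phi> g ` \<tau>))"

definition systolic_group_typ :: "('a, 'b) monoid_scheme \<Rightarrow> 'v itself \<Rightarrow> bool" where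
  "systolic_group_typ G (_ :: 'v itself) \<longleftrightarrow>
     (\<exists>(X :: 'v set set) \<phi>. systolic_complex X \<and> geometric_simplicial_action G X \<phi>)"

abbreviation systolic_group :: "('a, 'b) monoid_scheme \<Rightarrow> bool" where
  "systolic_group G \<equiv> systolic_group_typ G TYPE(nat)"

end

theory Submission
  imports Defs "HOL-Library.Countable_Set"
begin

text \<open>
  Two vertices \<open>g\<close>, \<open>h\<close> of the flag complex are adjacent iff \<open>g \<preceq> h \<preceq> g\<Delta>\<close> or
  \<open>h \<preceq> g \<preceq> h\<Delta>\<close>. Simple connectivity holds for every Garside structure: a loop is
  contracted towards a common upper bound \<open>h\<close> of its vertices by the retraction
  \<open>g \<mapsto> g\<Delta> \<and> h\<close>.

  Left translations act transitively on the vertices, so only the link of the identity matters.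
  Its vertices are the non-trivial simples \<open>s\<close> and their inverses; replacing \<open>s\<inverse>\<close> by the
  simple \<open>s\<inverse>\<Delta>\<close> turns adjacency into comparability for a transitive order. Hence the link has
  no induced pentagon, and an induced square consists of two incomparable simples with a
  non-trivial common lower bound, or with a common upper bound other than \<open>\<Delta>\<close>, which is exactly
  what the meet condition excludes. Conversely, a meet outside \<open>{e, a, b}\<close> yields such a square.
  Finally, finitely many simples make the group countable, so the flag complex can be relabelled
  by natural numbers, and the translation action is proper and cocompact.
\<close>

section \<open>Edge paths\<close>

lemma successively_iff_nth:
  "successively R xs \<longleftrightarrow> (\<forall>i. Suc i < length xs \<longrightarrow> R (xs ! i) (xs ! Suc i))"
proof (induction xs rule: induct_list012)
  case (3 x y zs)
  have "(\<forall>i. Suc i < length (x # y # zs) \<longrightarrow> R ((x # y # zs) ! i) ((x # y # zs) ! Suc i)) \<longleftrightarrow>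
        R x y \<and> (\<forall>i. Suc i < length (y # zs) \<longrightarrow> R ((y # zs) ! i) ((y # zs) ! Suc i))"
    by (metis (no_types, lifting) Suc_less_eq length_Cons nth_Cons_0 nth_Cons_Suc zero_less_Suc
        not0_implies_Suc)
  then show ?case using 3 by simp
qed auto

lemma path_move_append:
  "path_move Y p q \<Longrightarrow> path_move Y (xs @ p @ ys) (xs @ q @ ys)"
proof (induction rule: path_move.induct)
  case (stutter as u bs)
  show ?case using path_move.stutter[of Y "xs @ as" u "bs @ ys"] by simp
next
  case (triangle u v w as bs)
  show ?case using path_move.triangle[OF triangle, of "xs @ as" "bs @ ys"] by simp
qed

lemma path_equiv_refl: "path_equiv Y p p"
  unfolding path_equiv_def by simp

lemma path_equiv_trans [trans]: "path_equiv Y p q \<Longrightarrow> path_equiv Y q r \<Longrightarrow> path_equiv Y p r"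
  unfolding path_equiv_def by (rule rtranclp_trans)

lemma path_equiv_sym: "path_equiv Y p q \<Longrightarrow> path_equiv Y q p"
  unfolding path_equiv_def
proof (induction rule: rtranclp_induct)
  case (step y z)
  have "path_move Y z y \<or> path_move Y y z" using step(2) by blast
  then show ?case using step(3) by (rule converse_rtranclp_into_rtranclp)
qed simp

lemma path_equiv_append:
  "path_equiv Y p q \<Longrightarrow> path_equiv Y (xs @ p @ ys) (xs @ q @ ys)"
  unfolding path_equiv_def
proof (induction rule: rtranclp_induct)
  case (step y z)
  have "path_move Y (xs @ y @ ys) (xs @ z @ ys) \<or> path_move Y (xs @ z @ ys) (xs @ y @ ys)"
    using step(2) path_move_append by blast
  with step(3) show ?case by (rule rtranclp.rtrancl_into_rtrancl)
qed simp

lemma path_equiv_stutter: "path_equiv Y (xs @ [u, u] @ ys) (xs @ [u] @ ys)"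
  using path_move.stutter[of Y xs u ys] unfolding path_equiv_def by (blast intro: r_into_rtranclp)

lemma path_equiv_triangle:
  "{u, v, w} \<in> Y \<Longrightarrow> path_equiv Y (xs @ [u, v, w] @ ys) (xs @ [u, w] @ ys)"
  using path_move.triangle[of u v w Y xs ys] unfolding path_equiv_def by (blast intro: r_into_rtranclp)

lemma path_equiv_backtrack:
  assumes "{x, y} \<in> Y"
  shows "path_equiv Y (xs @ [x, y, x] @ ys) (xs @ [x] @ ys)"
proof -
  have "{x, y, x} \<in> Y" using assms by (simp add: insert_commute)
  then have "path_equiv Y (xs @ [x, y, x] @ ys) (xs @ [x, x] @ ys)" by (rule path_equiv_triangle)
  moreover have "path_equiv Y (xs @ [x, x] @ ys) (xs @ [x] @ ys)" by (rule path_equiv_stutter)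
  ultimately show ?thesis by (rule path_equiv_trans)
qed

lemma path_equiv_constant: "set xs \<subseteq> {h} \<Longrightarrow> path_equiv Y (h # xs) [h]"
proof (induction xs)
  case (Cons y ys)
  have "path_equiv Y (h # h # ys) (h # ys)" using path_equiv_stutter[of Y "[]" h ys] by simp
  moreover have "path_equiv Y (h # ys) [h]" and "y = h" using Cons by simp_all
  ultimately show ?case by (simp add: path_equiv_trans)
qed (simp add: path_equiv_refl)

section \<open>Induced cycles\<close>

lemma transitive_pentagon_has_chord:
  assumes trans: "\<forall>x\<in>A. \<forall>y\<in>A. \<forall>z\<in>A. R x y \<longrightarrow> R y z \<longrightarrow> R x z"
    and A: "x0 \<in> A" "x1 \<in> A" "x2 \<in> A" "x3 \<in> A" "x4 \<in> A"
    and E: "R x0 x1 \<or> R x1 x0" "R x1 x2 \<or> R x2 x1" "R x2 x3 \<or> R x3 x2" "R x3 x4 \<or> R x4 x3"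
      "R x4 x0 \<or> R x0 x4"
    and N: "\<not> R x0 x2" "\<not> R x2 x0" "\<not> R x0 x3" "\<not> R x3 x0" "\<not> R x1 x3" "\<not> R x3 x1"
      "\<not> R x1 x4" "\<not> R x4 x1" "\<not> R x2 x4" "\<not> R x4 x2"
  shows False
proof -
  have tr: "\<And>x y z. x \<in> A \<Longrightarrow> y \<in> A \<Longrightarrow> z \<in> A \<Longrightarrow> R x y \<Longrightarrow> R y z \<Longrightarrow> R x z"
    using trans by blast
  show False
    using E N tr[OF A(1) A(2) A(3)] tr[OF A(3) A(2) A(1)] tr[OF A(2) A(3) A(4)]
      tr[OF A(4) A(3) A(2)] tr[OF A(3) A(4) A(5)] tr[OF A(5) A(4) A(3)] tr[OF A(4) A(5) A(1)]
      tr[OF A(1) A(5) A(4)] tr[OF A(5) A(1) A(2)] tr[OF A(2) A(1) A(5)]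
    by blast
qed

lemma transitive_square_alternates:
  assumes trans: "\<forall>x\<in>A. \<forall>y\<in>A. \<forall>z\<in>A. R x y \<longrightarrow> R y z \<longrightarrow> R x z"
    and A: "x0 \<in> A" "x1 \<in> A" "x2 \<in> A" "x3 \<in> A"
    and E: "R x0 x1 \<or> R x1 x0" "R x1 x2 \<or> R x2 x1" "R x2 x3 \<or> R x3 x2" "R x3 x0 \<or> R x0 x3"
    and N: "\<not> R x0 x2" "\<not> R x2 x0" "\<not> R x1 x3" "\<not> R x3 x1"
  shows "(R x0 x1 \<and> R x2 x1 \<and> R x2 x3 \<and> R x0 x3) \<or> (R x1 x0 \<and> R x1 x2 \<and> R x3 x2 \<and> R x3 x0)"
proof -
  have tr: "\<And>x y z. x \<in> A \<Longrightarrow> y \<in> A \<Longrightarrow> z \<in> A \<Longrightarrow> R x y \<Longrightarrow> R y z \<Longrightarrow> R x z"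
    using trans by blast
  show ?thesis
    using E N tr[OF A(1) A(2) A(3)] tr[OF A(3) A(2) A(1)] tr[OF A(2) A(3) A(4)]
      tr[OF A(4) A(3) A(2)] tr[OF A(3) A(4) A(1)] tr[OF A(1) A(4) A(3)] tr[OF A(4) A(1) A(2)]
      tr[OF A(2) A(1) A(4)]
    by blast
qed

lemma is_edge_sym: "is_edge Y x y \<longleftrightarrow> is_edge Y y x"
  unfolding is_edge_def by (auto simp: insert_commute)

lemma not_six_large_if_induced_square:
  assumes "distinct [u0, u1, u2, u3]"
    and "is_edge Y u0 u1" "is_edge Y u1 u2" "is_edge Y u2 u3" "is_edge Y u3 u0"
    and "\<not> is_edge Y u0 u2" "\<not> is_edge Y u1 u3"
  shows "\<not> six_large Y"
proof -
  let ?c = "(!) [u0, u1, u2, u3]"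
  have quarter: "(i::nat) < 4 \<Longrightarrow> i = 0 \<or> i = 1 \<or> i = 2 \<or> i = 3" for i by arith
  have "inj_on ?c {..<4}" by (rule inj_on_nth) (use assms(1) in auto)
  moreover have "\<forall>i<4. is_edge Y (?c i) (?c ((i + 1) mod 4))"
  proof (intro allI impI)
    fix i :: nat assume "i < 4"
    then show "is_edge Y (?c i) (?c ((i + 1) mod 4))" using quarter assms(2-5) by fastforce
  qed
  moreover have "\<not> is_edge Y (?c i) (?c j)"
    if "i < 4" "j < 4" "j \<noteq> (i + 1) mod 4" "i \<noteq> (j + 1) mod 4" "i \<noteq> j" for i j
  proof -
    have "(i = 0 \<and> j = 2) \<or> (i = 2 \<and> j = 0) \<or> (i = 1 \<and> j = 3) \<or> (i = 3 \<and> j = 1)"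
      using quarter[OF that(1)] quarter[OF that(2)] that(3-5) by auto
    then show ?thesis using assms(6,7) is_edge_sym[of Y u2 u0] is_edge_sym[of Y u3 u1] by auto
  qed
  ultimately show ?thesis unfolding six_large_def by blast
qed

lemma transitive_chordless_square:
  fixes c :: "nat \<Rightarrow> 'a"
  assumes trans: "\<forall>x\<in>A. \<forall>y\<in>A. \<forall>z\<in>A. R x y \<longrightarrow> R y z \<longrightarrow> R x z"
    and A: "\<And>i. i < 4 \<Longrightarrow> c i \<in> A" and inj: "inj_on c {..<4}"
    and E: "\<And>i j. i < 4 \<Longrightarrow> j = (i + 1) mod 4 \<Longrightarrow> R (c i) (c j) \<or> R (c j) (c i)"
    and N: "\<And>i j. i < 4 \<Longrightarrow> j < 4 \<Longrightarrow> j \<noteq> (i + 1) mod 4 \<Longrightarrow> i \<noteq> (j + 1) mod 4 \<Longrightarrow> i \<noteq> j \<Longrightarrow>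
      \<not> R (c i) (c j)"
    and no_square: "\<And>a b c d. a \<in> A \<Longrightarrow> b \<in> A \<Longrightarrow> c \<in> A \<Longrightarrow> d \<in> A \<Longrightarrow>
      R a b \<Longrightarrow> R a d \<Longrightarrow> R c b \<Longrightarrow> R c d \<Longrightarrow> \<not> R a c \<Longrightarrow> \<not> R c a \<Longrightarrow> a \<noteq> c \<Longrightarrow>
      \<not> R b d \<Longrightarrow> \<not> R d b \<Longrightarrow> b \<noteq> d \<Longrightarrow> False"
  shows False
proof -
  have a: "c 0 \<in> A" "c 1 \<in> A" "c 2 \<in> A" "c 3 \<in> A" by (rule A; simp)+
  have e: "R (c 0) (c 1) \<or> R (c 1) (c 0)" "R (c 1) (c 2) \<or> R (c 2) (c 1)"
      "R (c 2) (c 3) \<or> R (c 3) (c 2)" "R (c 3) (c 0) \<or> R (c 0) (c 3)"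
    by (rule E; simp)+
  have n: "\<not> R (c 0) (c 2)" "\<not> R (c 2) (c 0)" "\<not> R (c 1) (c 3)" "\<not> R (c 3) (c 1)"
    by (rule N; simp)+
  have d: "c 0 \<noteq> c 2" "c 1 \<noteq> c 3" using inj by (auto dest: inj_onD)
  from transitive_square_alternates[OF trans a e n] show False
  proof
    assume "R (c 0) (c 1) \<and> R (c 2) (c 1) \<and> R (c 2) (c 3) \<and> R (c 0) (c 3)"
    then show False using no_square[OF a] n d by blast
  next
    assume "R (c 1) (c 0) \<and> R (c 1) (c 2) \<and> R (c 3) (c 2) \<and> R (c 3) (c 0)"
    then show False using no_square[OF a(2,1,4,3)] n d by blast
  qed
qed

lemma transitive_chordless_pentagon:
  fixes c :: "nat \<Rightarrow> 'a"
  assumes trans: "\<forall>x\<in>A. \<forall>y\<in>A. \<forall>z\<in>A. R x y \<longrightarrow> R y z \<longrightarrow> R x z"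
    and A: "\<And>i. i < 5 \<Longrightarrow> c i \<in> A"
    and E: "\<And>i j. i < 5 \<Longrightarrow> j = (i + 1) mod 5 \<Longrightarrow> R (c i) (c j) \<or> R (c j) (c i)"
    and N: "\<And>i j. i < 5 \<Longrightarrow> j < 5 \<Longrightarrow> j \<noteq> (i + 1) mod 5 \<Longrightarrow> i \<noteq> (j + 1) mod 5 \<Longrightarrow> i \<noteq> j \<Longrightarrow>
      \<not> R (c i) (c j)"
  shows False
proof -
  have a: "c 0 \<in> A" "c 1 \<in> A" "c 2 \<in> A" "c 3 \<in> A" "c 4 \<in> A" by (rule A; simp)+
  have e: "R (c 0) (c 1) \<or> R (c 1) (c 0)" "R (c 1) (c 2) \<or> R (c 2) (c 1)"
      "R (c 2) (c 3) \<or> R (c 3) (c 2)" "R (c 3) (c 4) \<or> R (c 4) (c 3)"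
      "R (c 4) (c 0) \<or> R (c 0) (c 4)"
    by (rule E; simp)+
  have n: "\<not> R (c 0) (c 2)" "\<not> R (c 2) (c 0)" "\<not> R (c 0) (c 3)" "\<not> R (c 3) (c 0)"
      "\<not> R (c 1) (c 3)" "\<not> R (c 3) (c 1)" "\<not> R (c 1) (c 4)" "\<not> R (c 4) (c 1)"
      "\<not> R (c 2) (c 4)" "\<not> R (c 4) (c 2)"
    by (rule N; simp)+
  show False by (rule transitive_pentagon_has_chord[OF trans a e n])
qed

lemma six_large_comparability:
  assumes edge: "\<And>u w. is_edge Y u w \<longleftrightarrow> u \<in> A \<and> w \<in> A \<and> u \<noteq> w \<and> (R u w \<or> R w u)"
    and trans: "\<forall>x\<in>A. \<forall>y\<in>A. \<forall>z\<in>A. R x y \<longrightarrow> R y z \<longrightarrow> R x z"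
    and no_square: "\<And>a b c d. a \<in> A \<Longrightarrow> b \<in> A \<Longrightarrow> c \<in> A \<Longrightarrow> d \<in> A \<Longrightarrow>
      R a b \<Longrightarrow> R a d \<Longrightarrow> R c b \<Longrightarrow> R c d \<Longrightarrow> \<not> R a c \<Longrightarrow> \<not> R c a \<Longrightarrow> a \<noteq> c \<Longrightarrow>
      \<not> R b d \<Longrightarrow> \<not> R d b \<Longrightarrow> b \<noteq> d \<Longrightarrow> False"
  shows "six_large Y"
  unfolding six_large_def
proof (intro ballI allI impI)
  fix k :: nat and c :: "nat \<Rightarrow> 'a"
  assume k: "k \<in> {4, 5}"
    and cycle: "inj_on c {..<k} \<and> (\<forall>i<k. is_edge Y (c i) (c ((i + 1) mod k)))"
  show "\<exists>i<k. \<exists>j<k. j \<noteq> (i + 1) mod k \<and> i \<noteq> (j + 1) mod k \<and> i \<noteq> j \<and> is_edge Y (c i) (c j)"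
  proof (rule ccontr)
    assume no_chord: "\<not> ?thesis"
    have A: "c i \<in> A" if "i < k" for i
      using cycle that edge by blast
    have E: "R (c i) (c j) \<or> R (c j) (c i)" if "i < k" "j = (i + 1) mod k" for i j
      using cycle that edge by blast
    have N: "\<not> R (c i) (c j)"
      if "i < k" "j < k" "j \<noteq> (i + 1) mod k" "i \<noteq> (j + 1) mod k" "i \<noteq> j" for i j
    proof -
      have "c i \<noteq> c j" using cycle that(1,2,5) by (meson inj_onD lessThan_iff)
      moreover have "\<not> is_edge Y (c i) (c j)" using no_chord that by blast
      ultimately show ?thesis using edge A that(1,2) by blast
    qed
    from k consider "k = 4" | "k = 5" by blast
    then show False
    proof cases
      case 1
      have "inj_on c {..<4}" using cycle 1 by simp
      from transitive_chordless_square[OF trans A[unfolded 1] this E[unfolded 1] N[unfolded 1] no_square]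
      show False .
    next
      case 2
      from transitive_chordless_pentagon[OF trans A[unfolded 2] E[unfolded 2] N[unfolded 2]]
      show False .
    qed
  qed
qed

section \<open>Injective relabelling of complexes\<close>

definition map_complex :: "('v \<Rightarrow> 'w) \<Rightarrow> 'v set set \<Rightarrow> 'w set set" where
  "map_complex f Y = (`) f ` Y"

lemma verts_map_complex: "verts (map_complex f Y) = f ` verts Y"
  unfolding verts_def map_complex_def by auto

lemma simplex_subset_verts: "\<sigma> \<in> Y \<Longrightarrow> \<sigma> \<subseteq> verts Y"
  unfolding verts_def by auto

lemma verts_link_subset: "verts (link Y v) \<subseteq> verts Y"
  unfolding verts_def link_def by auto

lemma image_mem_map_complex_iff:
  assumes "inj_on f (verts Y)" "\<sigma> \<subseteq> verts Y"
  shows "f ` \<sigma> \<in> map_complex f Y \<longleftrightarrow> \<sigma> \<in> Y"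
proof
  assume "f ` \<sigma> \<in> map_complex f Y"
  then obtain \<tau> where \<tau>: "\<tau> \<in> Y" "f ` \<sigma> = f ` \<tau>" unfolding map_complex_def by auto
  then have "\<sigma> = \<tau>" using inj_on_image_eq_iff[OF assms(1,2)] simplex_subset_verts by blast
  then show "\<sigma> \<in> Y" using \<tau> by simp
qed (auto simp: map_complex_def)

lemma path_move_map_complex:
  "path_move Y p q \<Longrightarrow> path_move (map_complex f Y) (map f p) (map f q)"
proof (induction rule: path_move.induct)
  case (stutter xs u ys)
  show ?case using path_move.stutter[of "map_complex f Y" "map f xs" "f u" "map f ys"] by simp
next
  case (triangle u v w xs ys)
  have "f ` {u, v, w} \<in> map_complex f Y" using triangle unfolding map_complex_def by (rule imageI)
  then show ?case
    using path_move.triangle[of "f u" "f v" "f w" "map_complex f Y" "map f xs" "map f ys"] by simp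
qed

lemma path_equiv_map_complex:
  "path_equiv Y p q \<Longrightarrow> path_equiv (map_complex f Y) (map f p) (map f q)"
  unfolding path_equiv_def
proof (induction rule: rtranclp_induct)
  case (step y z)
  have "path_move (map_complex f Y) (map f y) (map f z) \<or>
      path_move (map_complex f Y) (map f z) (map f y)"
    using step(2) path_move_map_complex by blast
  with step(3) show ?case by (rule rtranclp.rtrancl_into_rtrancl)
qed simp

lemma simplicial_complex_map_complex:
  assumes "simplicial_complex Y"
  shows "simplicial_complex (map_complex f Y)"
  unfolding simplicial_complex_def
proof (intro ballI conjI allI impI)
  fix \<sigma>' assume "\<sigma>' \<in> map_complex f Y"
  then obtain \<sigma> where \<sigma>: "\<sigma> \<in> Y" "\<sigma>' = f ` \<sigma>" unfolding map_complex_def by auto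
  then have faces: "finite \<sigma>" "\<sigma> \<noteq> {}" "\<And>\<tau>. \<tau> \<subseteq> \<sigma> \<Longrightarrow> \<tau> \<noteq> {} \<Longrightarrow> \<tau> \<in> Y"
    using assms unfolding simplicial_complex_def by blast+
  show "finite \<sigma>'" "\<sigma>' \<noteq> {}" using \<sigma>(2) faces by simp_all
  fix \<tau>' assume "\<tau>' \<subseteq> \<sigma>' \<and> \<tau>' \<noteq> {}"
  then obtain \<tau> where "\<tau> \<subseteq> \<sigma>" "\<tau>' = f ` \<tau>" "\<tau> \<noteq> {}"
    using \<sigma>(2) by (metis image_empty subset_imageE)
  then show "\<tau>' \<in> map_complex f Y" using faces(3) unfolding map_complex_def by blast
qed

context
  fixes f :: "'v \<Rightarrow> 'w" and Y :: "'v set set"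
  assumes inj: "inj_on f (verts Y)"
begin

lemma is_edge_map_complex_iff:
  assumes "x \<in> verts Y" "y \<in> verts Y"
  shows "is_edge (map_complex f Y) (f x) (f y) \<longleftrightarrow> is_edge Y x y"
proof -
  have "f ` {x, y} \<in> map_complex f Y \<longleftrightarrow> {x, y} \<in> Y"
    by (rule image_mem_map_complex_iff[OF inj]) (use assms in auto)
  moreover have "f x = f y \<longleftrightarrow> x = y" using inj assms by (auto simp: inj_on_def)
  ultimately show ?thesis unfolding is_edge_def by simp
qed

lemma edge_path_map_complex:
  "edge_path Y p \<Longrightarrow> edge_path (map_complex f Y) (map f p)"
  unfolding edge_path_def verts_map_complex
proof (intro conjI allI impI)
  assume p: "p \<noteq> [] \<and> set p \<subseteq> verts Y \<and> (\<forall>i. Suc i < length p \<longrightarrow> {p ! i, p ! Suc i} \<in> Y)"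
  show "map f p \<noteq> []" "set (map f p) \<subseteq> f ` verts Y" using p by auto
  fix i assume i: "Suc i < length (map f p)"
  have "f ` {p ! i, p ! Suc i} \<in> map_complex f Y"
    unfolding map_complex_def by (rule imageI) (use p i in simp)
  then show "{map f p ! i, map f p ! Suc i} \<in> map_complex f Y" using i by simp
qed

lemma edge_path_map_complex_lift:
  assumes "edge_path (map_complex f Y) p"
  shows "edge_path Y (map (inv_into (verts Y) f) p) \<and> map f (map (inv_into (verts Y) f) p) = p"
proof -
  let ?g = "inv_into (verts Y) f"
  have p: "set p \<subseteq> f ` verts Y" using assms by (simp add: edge_path_def verts_map_complex)
  have "edge_path Y (map ?g p)" unfolding edge_path_def
  proof (intro conjI allI impI)
    show "map ?g p \<noteq> []" using assms by (simp add: edge_path_def)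
    show "set (map ?g p) \<subseteq> verts Y" using p by (auto intro: inv_into_into)
    fix i assume i: "Suc i < length (map ?g p)"
    have "p ! i \<in> set p" "p ! Suc i \<in> set p" using i by simp_all
    then have pi: "p ! i \<in> f ` verts Y" "p ! Suc i \<in> f ` verts Y" using p by blast+
    have "{p ! i, p ! Suc i} \<in> map_complex f Y"
      using assms i unfolding edge_path_def by simp
    moreover have "f ` {?g (p ! i), ?g (p ! Suc i)} = {p ! i, p ! Suc i}"
      using pi by (simp add: f_inv_into_f)
    moreover have "{?g (p ! i), ?g (p ! Suc i)} \<subseteq> verts Y"
      using pi by (simp add: inv_into_into)
    ultimately have "{?g (p ! i), ?g (p ! Suc i)} \<in> Y"
      using image_mem_map_complex_iff[OF inj] by metis
    then show "{map ?g p ! i, map ?g p ! Suc i} \<in> Y" using i by simp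
  qed
  moreover have "map f (map ?g p) = p" using p by (induction p) (auto simp: f_inv_into_f)
  ultimately show ?thesis by simp
qed

lemma link_map_complex:
  assumes v: "v \<in> verts Y"
  shows "link (map_complex f Y) (f v) = map_complex f (link Y v)"
proof
  show "link (map_complex f Y) (f v) \<subseteq> map_complex f (link Y v)"
  proof
    fix \<tau>' assume \<tau>': "\<tau>' \<in> link (map_complex f Y) (f v)"
    then obtain \<tau> where \<tau>: "\<tau> \<in> Y" "\<tau>' = f ` \<tau>" unfolding link_def map_complex_def by auto
    have "insert v \<tau> \<subseteq> verts Y" using \<tau> v simplex_subset_verts by auto
    moreover have "f ` insert v \<tau> \<in> map_complex f Y" using \<tau>' \<tau> unfolding link_def by simp
    ultimately have "insert v \<tau> \<in> Y" using image_mem_map_complex_iff[OF inj] by blast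
    moreover have "v \<notin> \<tau>" using \<tau>' \<tau> unfolding link_def by auto
    ultimately show "\<tau>' \<in> map_complex f (link Y v)"
      using \<tau> unfolding link_def map_complex_def by simp
  qed
  show "map_complex f (link Y v) \<subseteq> link (map_complex f Y) (f v)"
  proof
    fix \<tau>' assume "\<tau>' \<in> map_complex f (link Y v)"
    then obtain \<tau> where \<tau>: "\<tau> \<in> Y" "v \<notin> \<tau>" "insert v \<tau> \<in> Y" "\<tau>' = f ` \<tau>"
      unfolding map_complex_def link_def by auto
    have "f v \<notin> f ` \<tau>"
      using \<tau>(2) inj_on_image_mem_iff[OF inj v simplex_subset_verts[OF \<tau>(1)]] by simp
    moreover have "f ` \<tau> \<in> map_complex f Y" "insert (f v) (f ` \<tau>) \<in> map_complex f Y"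
      unfolding map_complex_def by (rule imageI[OF \<tau>(1)], rule rev_image_eqI[OF \<tau>(3)], simp)
    ultimately show "\<tau>' \<in> link (map_complex f Y) (f v)" using \<tau>(4) unfolding link_def by simp
  qed
qed

lemma connected_complex_map_complex:
  assumes "connected_complex Y"
  shows "connected_complex (map_complex f Y)"
  unfolding connected_complex_def verts_map_complex
proof (intro conjI ballI)
  show "f ` verts Y \<noteq> {}" using assms by (simp add: connected_complex_def)
  fix u v assume "u \<in> f ` verts Y" "v \<in> f ` verts Y"
  then obtain x y where xy: "x \<in> verts Y" "y \<in> verts Y" "u = f x" "v = f y" by blast
  then obtain p where p: "edge_path Y p" "hd p = x" "last p = y"
    using assms unfolding connected_complex_def by blast
  have "p \<noteq> []" using p by (simp add: edge_path_def)
  then show "\<exists>p. edge_path (map_complex f Y) p \<and> hd p = u \<and> last p = v"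
    using edge_path_map_complex[OF p(1)] p xy by (intro exI[of _ "map f p"]) (simp add: hd_map last_map)
qed

lemma simply_connected_complex_map_complex:
  assumes Y: "simply_connected_complex Y"
  shows "simply_connected_complex (map_complex f Y)"
  unfolding simply_connected_complex_def
proof (intro conjI allI impI)
  show "connected_complex (map_complex f Y)"
    using Y connected_complex_map_complex by (simp add: simply_connected_complex_def)
  fix p assume p: "edge_path (map_complex f Y) p \<and> hd p = last p"
  let ?q = "map (inv_into (verts Y) f) p"
  have q: "edge_path Y ?q" "map f ?q = p" using edge_path_map_complex_lift p by auto
  have "p \<noteq> []" using p by (simp add: edge_path_def)
  then have "hd ?q = last ?q" using p by (simp add: hd_map last_map)
  then have "path_equiv Y ?q [hd ?q]" using Y q(1) by (simp add: simply_connected_complex_def)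
  then have "path_equiv (map_complex f Y) (map f ?q) (map f [hd ?q])"
    by (rule path_equiv_map_complex)
  moreover have "map f [hd ?q] = [hd p]"
    using q(2) \<open>p \<noteq> []\<close> by (metis hd_map list.map(1) list.map(2) list.simps(8))
  ultimately show "path_equiv (map_complex f Y) p [hd p]" using q(2) by simp
qed

lemma flag_complex_prop_map_complex:
  assumes flag: "flag_complex_prop Y"
  shows "flag_complex_prop (map_complex f Y)"
  unfolding flag_complex_prop_def
proof (intro allI impI)
  let ?g = "inv_into (verts Y) f"
  fix \<sigma> assume \<sigma>: "finite \<sigma> \<and> \<sigma> \<noteq> {} \<and> \<sigma> \<subseteq> verts (map_complex f Y) \<and>
    (\<forall>u\<in>\<sigma>. \<forall>v\<in>\<sigma>. u \<noteq> v \<longrightarrow> is_edge (map_complex f Y) u v)"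
  have \<sigma>_verts: "\<sigma> \<subseteq> f ` verts Y" using \<sigma> by (simp add: verts_map_complex)
  have "(\<lambda>y. f (?g y)) ` \<sigma> = (\<lambda>y. y) ` \<sigma>"
    by (rule image_cong) (use \<sigma>_verts in \<open>auto simp: f_inv_into_f\<close>)
  then have lift: "f ` (?g ` \<sigma>) = \<sigma>" by (simp add: image_image)
  have lift_verts: "?g ` \<sigma> \<subseteq> verts Y" using \<sigma>_verts by (auto intro: inv_into_into)
  have "\<forall>u\<in>?g ` \<sigma>. \<forall>v\<in>?g ` \<sigma>. u \<noteq> v \<longrightarrow> is_edge Y u v"
  proof (intro ballI impI)
    fix u v assume uv: "u \<in> ?g ` \<sigma>" "v \<in> ?g ` \<sigma>" "u \<noteq> v"
    have "f u \<in> \<sigma>" "f v \<in> \<sigma>" using uv lift by auto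
    moreover have "f u \<noteq> f v" using uv lift_verts inj_onD[OF inj] by blast
    ultimately have "is_edge (map_complex f Y) (f u) (f v)" using \<sigma> by blast
    then show "is_edge Y u v" using is_edge_map_complex_iff uv lift_verts by blast
  qed
  then have "?g ` \<sigma> \<in> Y" using flag \<sigma> lift_verts unfolding flag_complex_prop_def by auto
  then show "\<sigma> \<in> map_complex f Y" using lift unfolding map_complex_def by blast
qed

lemma six_large_map_complex:
  assumes large: "six_large Y"
  shows "six_large (map_complex f Y)"
  unfolding six_large_def
proof (intro ballI allI impI)
  let ?g = "inv_into (verts Y) f"
  fix k and c :: "nat \<Rightarrow> 'w"
  assume k: "k \<in> {4, 5}"
    and cycle: "inj_on c {..<k} \<and> (\<forall>i<k. is_edge (map_complex f Y) (c i) (c ((i + 1) mod k)))"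
  have c_verts: "c i \<in> f ` verts Y" if "i < k" for i
  proof -
    have "is_edge (map_complex f Y) (c i) (c ((i + 1) mod k))" using cycle that by blast
    then have "c i \<in> verts (map_complex f Y)" unfolding is_edge_def verts_def by blast
    then show ?thesis by (simp add: verts_map_complex)
  qed
  define c' where "c' = ?g \<circ> c"
  have c'_verts: "c' i \<in> verts Y" and f_c': "f (c' i) = c i" if "i < k" for i
    using c_verts[OF that] by (auto simp: c'_def inv_into_into f_inv_into_f)
  have edge_iff: "is_edge Y (c' i) (c' j) \<longleftrightarrow> is_edge (map_complex f Y) (c i) (c j)"
    if "i < k" "j < k" for i j
    using is_edge_map_complex_iff[OF c'_verts[OF that(1)] c'_verts[OF that(2)]] that f_c' by simp
  have "inj_on c' {..<k}"
  proof (rule inj_onI)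
    fix i j assume "i \<in> {..<k}" "j \<in> {..<k}" "c' i = c' j"
    then have "c i = c j" using f_c' by (metis lessThan_iff)
    then show "i = j" using cycle \<open>i \<in> {..<k}\<close> \<open>j \<in> {..<k}\<close> by (meson inj_onD)
  qed
  moreover have "\<forall>i<k. is_edge Y (c' i) (c' ((i + 1) mod k))"
    using cycle edge_iff k by auto
  ultimately obtain i j where "i < k" "j < k" "j \<noteq> (i + 1) mod k" "i \<noteq> (j + 1) mod k" "i \<noteq> j"
      "is_edge Y (c' i) (c' j)"
    using large k unfolding six_large_def by blast
  then show "\<exists>i<k. \<exists>j<k. j \<noteq> (i + 1) mod k \<and> i \<noteq> (j + 1) mod k \<and> i \<noteq> j \<and>
      is_edge (map_complex f Y) (c i) (c j)"
    using edge_iff by blast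
qed

end

lemma systolic_complex_map_complex:
  assumes inj: "inj_on f (verts Y)" and Y: "systolic_complex Y"
  shows "systolic_complex (map_complex f Y)"
  unfolding systolic_complex_def
proof (intro conjI ballI)
  show "simplicial_complex (map_complex f Y)" "connected_complex (map_complex f Y)"
      "simply_connected_complex (map_complex f Y)"
    using Y inj simplicial_complex_map_complex connected_complex_map_complex
      simply_connected_complex_map_complex
    unfolding systolic_complex_def by blast+
  fix w assume "w \<in> verts (map_complex f Y)"
  then obtain v where v: "v \<in> verts Y" "w = f v" by (auto simp: verts_map_complex)
  have inj_link: "inj_on f (verts (link Y v))" using inj_on_subset[OF inj verts_link_subset] .
  have "flag_complex_prop (link Y v)" "six_large (link Y v)"
    using Y v unfolding systolic_complex_def by blast+
  then show "flag_complex_prop (link (map_complex f Y) w)" "six_large (link (map_complex f Y) w)"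
    using link_map_complex[OF inj v(1)] v(2) flag_complex_prop_map_complex[OF inj_link]
      six_large_map_complex[OF inj_link] by simp_all
qed

section \<open>Geometric actions\<close>

lemma group_action_by_bijections:
  assumes G: "group G" and Bij: "\<And>g. g \<in> carrier G \<Longrightarrow> \<phi> g \<in> Bij E"
    and mult: "\<And>g h e. g \<in> carrier G \<Longrightarrow> h \<in> carrier G \<Longrightarrow> e \<in> E \<Longrightarrow>
      \<phi> (g \<otimes>\<^bsub>G\<^esub> h) e = \<phi> g (\<phi> h e)"
  shows "group_action G E \<phi>"
proof -
  have "\<phi> \<in> hom G (BijGroup E)"
  proof (rule homI)
    show "\<phi> g \<in> carrier (BijGroup E)" if "g \<in> carrier G" for g
      using Bij[OF that] by (simp add: BijGroup_def)
    fix g h assume gh: "g \<in> carrier G" "h \<in> carrier G"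
    then have gh_Bij: "\<phi> (g \<otimes>\<^bsub>G\<^esub> h) \<in> Bij E" by (intro Bij monoid.m_closed[OF group.is_monoid[OF G]])
    have "\<phi> (g \<otimes>\<^bsub>G\<^esub> h) = compose E (\<phi> g) (\<phi> h)"
    proof
      fix e show "\<phi> (g \<otimes>\<^bsub>G\<^esub> h) e = compose E (\<phi> g) (\<phi> h) e"
      proof (cases "e \<in> E")
        case True
        then show ?thesis using mult[OF gh] by (simp add: compose_eq)
      next
        case False
        then show ?thesis
          using extensional_arb[OF Bij_imp_extensional[OF gh_Bij]] by (simp add: compose_def)
      qed
    qed
    then show "\<phi> (g \<otimes>\<^bsub>G\<^esub> h) = \<phi> g \<otimes>\<^bsub>BijGroup E\<^esub> \<phi> h"
      using Bij gh by (simp add: BijGroup_def)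
  qed
  then show ?thesis
    using G group_BijGroup unfolding group_action_def group_hom_def group_hom_axioms_def by blast
qed

lemma (in group) group_action_mult_left: "group_action G (carrier G) (\<lambda>g. \<lambda>x \<in> carrier G. g \<otimes> x)"
proof (rule group_action_by_bijections[OF is_group])
  fix g assume g: "g \<in> carrier G"
  have "bij_betw (\<lambda>x. g \<otimes> x) (carrier G) (carrier G)"
    by (rule bij_betw_byWitness[where f' = "\<lambda>x. inv g \<otimes> x"]) (use g in \<open>auto simp: m_assoc[symmetric]\<close>)
  then show "(\<lambda>x \<in> carrier G. g \<otimes> x) \<in> Bij (carrier G)" by (simp add: Bij_def)
  fix h e assume "h \<in> carrier G" "e \<in> carrier G"
  then show "(\<lambda>x \<in> carrier G. (g \<otimes> h) \<otimes> x) e = (\<lambda>x \<in> carrier G. g \<otimes> x) ((\<lambda>x \<in> carrier G. h \<otimes> x) e)"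
    using g by (simp add: m_assoc)
qed

definition relabel_action :: "('v \<Rightarrow> 'w) \<Rightarrow> 'v set \<Rightarrow> ('g \<Rightarrow> 'v \<Rightarrow> 'v) \<Rightarrow> 'g \<Rightarrow> 'w \<Rightarrow> 'w" where
  "relabel_action f E \<psi> g = restrict (f \<circ> \<psi> g \<circ> inv_into E f) (f ` E)"

lemma relabel_action_apply:
  "inj_on f E \<Longrightarrow> e \<in> E \<Longrightarrow> relabel_action f E \<psi> g (f e) = f (\<psi> g e)"
  by (simp add: relabel_action_def)

lemma relabel_action_image:
  assumes "inj_on f E" "\<sigma> \<subseteq> E"
  shows "relabel_action f E \<psi> g ` (f ` \<sigma>) = f ` (\<psi> g ` \<sigma>)"
proof -
  have "relabel_action f E \<psi> g ` (f ` \<sigma>) = (\<lambda>e. f (\<psi> g e)) ` \<sigma>"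
    unfolding image_image by (rule image_cong) (use assms in \<open>auto intro!: relabel_action_apply\<close>)
  then show ?thesis by (simp add: image_image)
qed

lemma group_action_relabel:
  assumes act: "group_action G E \<psi>" and inj: "inj_on f E"
  shows "group_action G (f ` E) (relabel_action f E \<psi>)"
proof (rule group_action_by_bijections)
  interpret \<psi>: group_action G E \<psi> by (fact act)
  show "group G" by (rule \<psi>.group_hom[THEN group_hom.axioms(1)])
  fix g assume g: "g \<in> carrier G"
  have "bij_betw (\<psi> g) E E" using \<psi>.bij_prop0[OF g] by (simp add: Bij_def)
  then have "bij_betw (\<psi> g \<circ> inv_into E f) (f ` E) E"
    by (rule bij_betw_trans[OF bij_betw_inv_into[OF inj_on_imp_bij_betw[OF inj]]])
  then have "bij_betw (f \<circ> (\<psi> g \<circ> inv_into E f)) (f ` E) (f ` E)"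
    by (rule bij_betw_trans[OF _ inj_on_imp_bij_betw[OF inj]])
  then show "relabel_action f E \<psi> g \<in> Bij (f ` E)"
    unfolding Bij_def relabel_action_def comp_assoc by simp
  fix h e assume h: "h \<in> carrier G" and e: "e \<in> f ` E"
  then obtain x where x: "x \<in> E" "e = f x" by blast
  have "\<psi> h x \<in> E" using \<psi>.element_image[OF h x(1)] by simp
  then show "relabel_action f E \<psi> (g \<otimes>\<^bsub>G\<^esub> h) e = relabel_action f E \<psi> g (relabel_action f E \<psi> h e)"
    using x inj \<psi>.composition_rule[OF x(1) g h] by (simp add: relabel_action_apply)
qed

lemma relabel_action_Int:
  assumes act: "group_action G E \<psi>" and inj: "inj_on f E" and F: "F \<subseteq> f ` E" and g: "g \<in> carrier G"
  shows "relabel_action f E \<psi> g ` F \<inter> F = f ` (\<psi> g ` inv_into E f ` F \<inter> inv_into E f ` F)"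
proof -
  let ?F = "inv_into E f ` F"
  have lift: "f ` ?F = F" "?F \<subseteq> E" using F by (auto simp: image_inv_into_cancel inv_into_into)
  have "\<psi> g ` ?F \<subseteq> E" using lift(2) group_action.surj_prop[OF act g] by blast
  then have "f ` (\<psi> g ` ?F \<inter> ?F) = f ` (\<psi> g ` ?F) \<inter> f ` ?F"
    by (rule inj_on_image_Int[OF inj _ lift(2)])
  then show ?thesis using relabel_action_image[OF inj lift(2), of \<psi> g] lift(1) by simp
qed

lemma geometric_simplicial_action_map_complex:
  assumes act: "geometric_simplicial_action G Y \<psi>" and inj: "inj_on f (verts Y)"
  shows "geometric_simplicial_action G (map_complex f Y) (relabel_action f (verts Y) \<psi>)"
proof -
  let ?E = "verts Y" and ?\<phi> = "relabel_action f (verts Y) \<psi>"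
  interpret \<psi>: group_action G ?E \<psi>
    using act by (simp add: geometric_simplicial_action_def)
  have simplicial: "?\<phi> g ` \<sigma>' \<in> map_complex f Y"
    if g: "g \<in> carrier G" and \<sigma>': "\<sigma>' \<in> map_complex f Y" for g \<sigma>'
  proof -
    obtain \<sigma> where \<sigma>: "\<sigma> \<in> Y" "\<sigma>' = f ` \<sigma>" using \<sigma>' by (auto simp: map_complex_def)
    have "\<psi> g ` \<sigma> \<in> Y" using act g \<sigma>(1) by (simp add: geometric_simplicial_action_def)
    then show ?thesis
      using \<sigma> relabel_action_image[OF inj simplex_subset_verts[OF \<sigma>(1)], of \<psi> g]
      by (simp add: map_complex_def)
  qed
  have proper: "finite {g \<in> carrier G. ?\<phi> g ` F \<inter> F \<noteq> {}}"
    if F: "finite F" "F \<subseteq> verts (map_complex f Y)" for F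
  proof -
    let ?F = "inv_into ?E f ` F"
    have F': "F \<subseteq> f ` ?E" "?F \<subseteq> ?E"
      using F(2) by (auto simp: verts_map_complex inv_into_into)
    have "{g \<in> carrier G. ?\<phi> g ` F \<inter> F \<noteq> {}} = {g \<in> carrier G. \<psi> g ` ?F \<inter> ?F \<noteq> {}}"
      using relabel_action_Int[OF \<psi>.group_action_axioms inj F'(1)]
      by (intro Collect_cong conj_cong refl) simp
    then show ?thesis
      using act F(1) F'(2) by (simp add: geometric_simplicial_action_def)
  qed
  obtain K where K: "finite K" "K \<subseteq> Y" "\<forall>\<sigma>\<in>Y. \<exists>g\<in>carrier G. \<exists>\<tau>\<in>K. \<sigma> \<subseteq> \<psi> g ` \<tau>"
    using act by (auto simp: geometric_simplicial_action_def)
  have cocompact: "\<exists>g\<in>carrier G. \<exists>\<tau>\<in>map_complex f K. \<sigma>' \<subseteq> ?\<phi> g ` \<tau>"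
    if \<sigma>': "\<sigma>' \<in> map_complex f Y" for \<sigma>'
  proof -
    obtain \<sigma> where \<sigma>: "\<sigma> \<in> Y" "\<sigma>' = f ` \<sigma>" using \<sigma>' by (auto simp: map_complex_def)
    then obtain g \<tau> where "g \<in> carrier G" "\<tau> \<in> K" "\<sigma> \<subseteq> \<psi> g ` \<tau>" using K(3) by blast
    moreover have "\<tau> \<subseteq> ?E" using \<open>\<tau> \<in> K\<close> K(2) simplex_subset_verts by blast
    ultimately have "\<sigma>' \<subseteq> ?\<phi> g ` (f ` \<tau>)"
      using \<sigma>(2) relabel_action_image[OF inj \<open>\<tau> \<subseteq> ?E\<close>, of \<psi> g] by auto
    moreover have "f ` \<tau> \<in> map_complex f K"
      unfolding map_complex_def using \<open>\<tau> \<in> K\<close> by (rule imageI)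
    ultimately show ?thesis using \<open>g \<in> carrier G\<close> by blast
  qed
  show ?thesis
    unfolding geometric_simplicial_action_def
  proof (intro conjI ballI allI impI exI[of _ "map_complex f K"])
    show "group_action G (verts (map_complex f Y)) ?\<phi>"
      using group_action_relabel[OF \<psi>.group_action_axioms inj] by (simp add: verts_map_complex)
    show "finite (map_complex f K)" using K(1) by (simp add: map_complex_def)
    show "map_complex f K \<subseteq> map_complex f Y" using K(2) by (auto simp: map_complex_def)
  qed (use simplicial proper cocompact in blast)+
qed

section \<open>Garside structures\<close>

locale garside =
  fixes G (structure) and P :: "'a set" and \<Delta> :: 'a
  assumes garside: "garside_structure G P \<Delta>"
begin

sublocale group G
  using garside unfolding garside_structure_def by blast

lemma P_subset_carrier: "P \<subseteq> carrier G"
  and one_in_P: "\<one> \<in> P"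
  and P_mult_closed: "x \<in> P \<Longrightarrow> y \<in> P \<Longrightarrow> x \<otimes> y \<in> P"
  and Delta_in_P: "\<Delta> \<in> P"
  and lattice_leL: "lattice_order_on (carrier G) (leL G P)"
  and P_generated_by_simples: "P = {listprod G xs | xs. set xs \<subseteq> simples G P \<Delta>}"
  and Delta_conj_P: "(\<lambda>x. inv \<Delta> \<otimes> x \<otimes> \<Delta>) ` P = P"
  using garside unfolding garside_structure_def by blast+

lemma P_inv_closed_eq_one: "x \<in> P \<Longrightarrow> inv x \<in> P \<Longrightarrow> x = \<one>"
  using garside unfolding garside_structure_def by blast

lemma P_carrier [simp]: "x \<in> P \<Longrightarrow> x \<in> carrier G"
  using P_subset_carrier by blast

lemma Delta_carrier [simp]: "\<Delta> \<in> carrier G"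
  using Delta_in_P by simp

lemma Delta_conj_in_P_iff: "x \<in> carrier G \<Longrightarrow> inv \<Delta> \<otimes> x \<otimes> \<Delta> \<in> P \<longleftrightarrow> x \<in> P"
proof
  assume x: "x \<in> carrier G" and "inv \<Delta> \<otimes> x \<otimes> \<Delta> \<in> P"
  then obtain y where "y \<in> P" "inv \<Delta> \<otimes> x \<otimes> \<Delta> = inv \<Delta> \<otimes> y \<otimes> \<Delta>"
    using Delta_conj_P by force
  then show "x \<in> P" using x by (simp add: m_assoc)
next
  assume "x \<in> P"
  then show "inv \<Delta> \<otimes> x \<otimes> \<Delta> \<in> P" using Delta_conj_P by blast
qed

lemma Delta_inv_conj_in_P_iff: "x \<in> carrier G \<Longrightarrow> \<Delta> \<otimes> x \<otimes> inv \<Delta> \<in> P \<longleftrightarrow> x \<in> P"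
proof -
  assume x: "x \<in> carrier G"
  have "inv \<Delta> \<otimes> (\<Delta> \<otimes> x \<otimes> inv \<Delta>) \<otimes> \<Delta> = x"
    using x by (simp add: m_assoc[symmetric]) (simp add: m_assoc)
  then show ?thesis using Delta_conj_in_P_iff[of "\<Delta> \<otimes> x \<otimes> inv \<Delta>"] x by simp
qed

lemma mult_inv_cancel [simp]: "x \<in> carrier G \<Longrightarrow> y \<in> carrier G \<Longrightarrow> x \<otimes> (inv x \<otimes> y) = y"
  and inv_mult_cancel [simp]: "x \<in> carrier G \<Longrightarrow> y \<in> carrier G \<Longrightarrow> inv x \<otimes> (x \<otimes> y) = y"
  by (simp_all add: m_assoc[symmetric])

lemma inv_mult_eq_one_iff: "x \<in> carrier G \<Longrightarrow> y \<in> carrier G \<Longrightarrow> inv x \<otimes> y = \<one> \<longleftrightarrow> x = y"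
  by (metis inv_equality inv_inv inv_closed r_inv)

abbreviation le (infix "\<preceq>" 50) where "a \<preceq> b \<equiv> leL G P a b"

lemma le_iff: "a \<preceq> b \<longleftrightarrow> inv a \<otimes> b \<in> P"
  by (simp add: leL_def)

lemma le_refl: "a \<in> carrier G \<Longrightarrow> a \<preceq> a"
  by (simp add: le_iff one_in_P)

lemma le_antisym: "a \<in> carrier G \<Longrightarrow> b \<in> carrier G \<Longrightarrow> a \<preceq> b \<Longrightarrow> b \<preceq> a \<Longrightarrow> a = b"
proof -
  assume ab: "a \<in> carrier G" "b \<in> carrier G" "a \<preceq> b" "b \<preceq> a"
  then have "inv a \<otimes> b \<in> P" "inv (inv a \<otimes> b) \<in> P" by (auto simp: le_iff inv_mult_group)
  then show ?thesis using ab inv_mult_eq_one_iff P_inv_closed_eq_one by blast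
qed

lemma le_trans:
  "a \<in> carrier G \<Longrightarrow> b \<in> carrier G \<Longrightarrow> c \<in> carrier G \<Longrightarrow> a \<preceq> b \<Longrightarrow> b \<preceq> c \<Longrightarrow> a \<preceq> c"
proof -
  assume abc: "a \<in> carrier G" "b \<in> carrier G" "c \<in> carrier G" and "a \<preceq> b" "b \<preceq> c"
  then have "(inv a \<otimes> b) \<otimes> (inv b \<otimes> c) \<in> P" by (simp add: le_iff P_mult_closed)
  also have "(inv a \<otimes> b) \<otimes> (inv b \<otimes> c) = inv a \<otimes> c"
    using abc by (simp add: m_assoc[symmetric]) (simp add: m_assoc)
  finally show ?thesis by (simp add: le_iff)
qed

lemma le_mult_left_iff:
  "g \<in> carrier G \<Longrightarrow> a \<in> carrier G \<Longrightarrow> b \<in> carrier G \<Longrightarrow> g \<otimes> a \<preceq> g \<otimes> b \<longleftrightarrow> a \<preceq> b"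
  by (simp add: le_iff inv_mult_group m_assoc)

lemma le_mult_Delta_iff:
  "a \<in> carrier G \<Longrightarrow> b \<in> carrier G \<Longrightarrow> a \<otimes> \<Delta> \<preceq> b \<otimes> \<Delta> \<longleftrightarrow> a \<preceq> b"
proof -
  assume ab: "a \<in> carrier G" "b \<in> carrier G"
  have "inv (a \<otimes> \<Delta>) \<otimes> (b \<otimes> \<Delta>) = inv \<Delta> \<otimes> (inv a \<otimes> b) \<otimes> \<Delta>"
    using ab by (simp add: inv_mult_group m_assoc)
  then show ?thesis using ab Delta_conj_in_P_iff[of "inv a \<otimes> b"] by (simp add: le_iff)
qed

lemma one_le_iff: "b \<in> carrier G \<Longrightarrow> \<one> \<preceq> b \<longleftrightarrow> b \<in> P"
  by (simp add: le_iff)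

lemma le_one_iff: "b \<in> carrier G \<Longrightarrow> b \<preceq> \<one> \<longleftrightarrow> inv b \<in> P"
  by (simp add: le_iff)

lemma P_le_one_eq: "x \<in> P \<Longrightarrow> x \<preceq> \<one> \<Longrightarrow> x = \<one>"
  using le_one_iff P_inv_closed_eq_one by simp

lemma le_mult_Delta: "x \<in> carrier G \<Longrightarrow> x \<preceq> x \<otimes> \<Delta>"
  by (simp add: le_iff m_assoc[symmetric] Delta_in_P)

lemma Delta_le_mult_Delta: "x \<in> P \<Longrightarrow> \<Delta> \<preceq> x \<otimes> \<Delta>"
  using Delta_conj_in_P_iff[of x] by (simp add: le_iff m_assoc)

lemma is_glb_on_leL_unique:
  "is_glb_on (carrier G) (leL G P) a b m \<Longrightarrow> is_glb_on (carrier G) (leL G P) a b m' \<Longrightarrow> m = m'"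
  unfolding is_glb_on_def using le_antisym by blast

lemma meetL_glb:
  assumes "a \<in> carrier G" "b \<in> carrier G"
  shows "is_glb_on (carrier G) (leL G P) a b (meetL G P a b)"
proof -
  obtain m where m: "is_glb_on (carrier G) (leL G P) a b m"
    using lattice_leL assms unfolding lattice_order_on_def by blast
  then have "meetL G P a b = m"
    unfolding meetL_def by (rule the_equality) (use m is_glb_on_leL_unique in blast)
  then show ?thesis using m by simp
qed

lemma meetL_closed [simp]: "a \<in> carrier G \<Longrightarrow> b \<in> carrier G \<Longrightarrow> meetL G P a b \<in> carrier G"
  and meetL_le1: "a \<in> carrier G \<Longrightarrow> b \<in> carrier G \<Longrightarrow> meetL G P a b \<preceq> a"
  and meetL_le2: "a \<in> carrier G \<Longrightarrow> b \<in> carrier G \<Longrightarrow> meetL G P a b \<preceq> b"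
  and meetL_greatest: "a \<in> carrier G \<Longrightarrow> b \<in> carrier G \<Longrightarrow> c \<in> carrier G \<Longrightarrow>
    c \<preceq> a \<Longrightarrow> c \<preceq> b \<Longrightarrow> c \<preceq> meetL G P a b"
  using meetL_glb unfolding is_glb_on_def by blast+

definition joinL :: "'a \<Rightarrow> 'a \<Rightarrow> 'a" where
  "joinL a b = (THE m. is_lub_on (carrier G) (leL G P) a b m)"

lemma joinL_lub: "a \<in> carrier G \<Longrightarrow> b \<in> carrier G \<Longrightarrow> is_lub_on (carrier G) (leL G P) a b (joinL a b)"
proof -
  assume "a \<in> carrier G" "b \<in> carrier G"
  then obtain m where m: "is_lub_on (carrier G) (leL G P) a b m"
    using lattice_leL unfolding lattice_order_on_def by blast
  then have "joinL a b = m"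
    unfolding joinL_def by (rule the_equality) (use m le_antisym in \<open>auto simp: is_lub_on_def\<close>)
  then show ?thesis using m by simp
qed

lemma joinL_closed [simp]: "a \<in> carrier G \<Longrightarrow> b \<in> carrier G \<Longrightarrow> joinL a b \<in> carrier G"
  and joinL_ge1: "a \<in> carrier G \<Longrightarrow> b \<in> carrier G \<Longrightarrow> a \<preceq> joinL a b"
  and joinL_ge2: "a \<in> carrier G \<Longrightarrow> b \<in> carrier G \<Longrightarrow> b \<preceq> joinL a b"
  and joinL_least: "a \<in> carrier G \<Longrightarrow> b \<in> carrier G \<Longrightarrow> c \<in> carrier G \<Longrightarrow>
    a \<preceq> c \<Longrightarrow> b \<preceq> c \<Longrightarrow> joinL a b \<preceq> c"
  using joinL_lub unfolding is_lub_on_def by blast+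

lemma leR_iff: "a \<in> carrier G \<Longrightarrow> b \<in> carrier G \<Longrightarrow> leR G P a b \<longleftrightarrow> inv b \<preceq> inv a"
  by (simp add: leR_def le_iff)

lemma leR_refl: "a \<in> carrier G \<Longrightarrow> leR G P a a"
  by (simp add: leR_def one_in_P)

lemma one_leR_iff: "b \<in> carrier G \<Longrightarrow> leR G P \<one> b \<longleftrightarrow> b \<in> P"
  by (simp add: leR_def)

lemma leR_one_iff: "b \<in> carrier G \<Longrightarrow> leR G P b \<one> \<longleftrightarrow> inv b \<in> P"
  by (simp add: leR_def)

lemma leR_antisym: "a \<in> carrier G \<Longrightarrow> b \<in> carrier G \<Longrightarrow> leR G P a b \<Longrightarrow> leR G P b a \<Longrightarrow> a = b"
  using leR_iff le_antisym by (metis inv_closed inv_inv)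

lemma meetR_eq_inv_joinL:
  assumes "a \<in> carrier G" "b \<in> carrier G"
  shows "is_glb_on (carrier G) (leR G P) a b (inv (joinL (inv a) (inv b)))"
  unfolding is_glb_on_def
proof (intro conjI ballI impI)
  let ?j = "joinL (inv a) (inv b)"
  show "inv ?j \<in> carrier G" using assms by simp
  show "leR G P (inv ?j) a" "leR G P (inv ?j) b"
    using assms joinL_ge1 joinL_ge2 by (simp_all add: leR_iff)
  fix c assume "c \<in> carrier G" "leR G P c a \<and> leR G P c b"
  then have "?j \<preceq> inv c" using assms joinL_least[of "inv a" "inv b" "inv c"] by (simp add: leR_iff)
  then show "leR G P c (inv ?j)" using assms \<open>c \<in> carrier G\<close> by (simp add: leR_iff)
qed

lemma meetR_glb:
  assumes "a \<in> carrier G" "b \<in> carrier G"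
  shows "is_glb_on (carrier G) (leR G P) a b (meetR G P a b)"
proof -
  let ?m = "inv (joinL (inv a) (inv b))"
  have "meetR G P a b = ?m"
    unfolding meetR_def
  proof (rule the_equality)
    show "is_glb_on (carrier G) (leR G P) a b ?m" by (rule meetR_eq_inv_joinL[OF assms])
    fix m assume "is_glb_on (carrier G) (leR G P) a b m"
    then show "m = ?m"
      using meetR_eq_inv_joinL[OF assms] leR_antisym unfolding is_glb_on_def by blast
  qed
  then show ?thesis using meetR_eq_inv_joinL[OF assms] by simp
qed

lemma mem_simples_iff: "x \<in> simples G P \<Delta> \<longleftrightarrow> x \<in> P \<and> x \<preceq> \<Delta>"
  unfolding simples_def using one_le_iff by auto

lemma simples_subset_P: "simples G P \<Delta> \<subseteq> P"
  by (auto simp: mem_simples_iff)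

definition rcompl :: "'a \<Rightarrow> 'a" where
  "rcompl x = inv x \<otimes> \<Delta>"

lemma rcompl_closed [simp]: "x \<in> carrier G \<Longrightarrow> rcompl x \<in> carrier G"
  by (simp add: rcompl_def)

lemma rcompl_simple: "x \<in> simples G P \<Delta> \<Longrightarrow> rcompl x \<in> simples G P \<Delta>"
proof -
  assume "x \<in> simples G P \<Delta>"
  then have x: "x \<in> P" "x \<preceq> \<Delta>" by (auto simp: mem_simples_iff)
  have "inv (rcompl x) \<otimes> \<Delta> = inv \<Delta> \<otimes> x \<otimes> \<Delta>"
    using x by (simp add: rcompl_def inv_mult_group m_assoc)
  then have "rcompl x \<preceq> \<Delta>" using Delta_conj_in_P_iff[of x] x by (simp add: le_iff)
  moreover have "rcompl x \<in> P" using x by (simp add: rcompl_def le_iff)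
  ultimately show ?thesis by (simp add: mem_simples_iff)
qed

lemma rcompl_eq_one_iff: "x \<in> carrier G \<Longrightarrow> rcompl x = \<one> \<longleftrightarrow> x = \<Delta>"
  unfolding rcompl_def using inv_mult_eq_one_iff by simp

lemma leR_rcompl_iff: "x \<in> carrier G \<Longrightarrow> y \<in> carrier G \<Longrightarrow> leR G P (rcompl y) (rcompl x) \<longleftrightarrow> x \<preceq> y"
proof -
  assume "x \<in> carrier G" "y \<in> carrier G"
  then have "rcompl x \<otimes> inv (rcompl y) = inv x \<otimes> y"
    by (simp add: rcompl_def inv_mult_group m_assoc[symmetric]) (simp add: m_assoc)
  then show ?thesis by (simp add: leR_def le_iff)
qed

lemma listprod_Cons [simp]: "listprod G (x # xs) = x \<otimes> listprod G xs"
  and listprod_Nil [simp]: "listprod G [] = \<one>"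
  by (simp_all add: listprod_def)

lemma listprod_in_P: "set xs \<subseteq> P \<Longrightarrow> listprod G xs \<in> P"
  by (induction xs) (auto simp: one_in_P P_mult_closed)

lemma simple_prefix_exists:
  assumes "x \<in> P" "x \<noteq> \<one>"
  shows "\<exists>s \<in> simples G P \<Delta>. s \<noteq> \<one> \<and> s \<preceq> x"
proof -
  obtain xs where xs: "set xs \<subseteq> simples G P \<Delta>" "x = listprod G xs"
    using assms(1) P_generated_by_simples by blast
  have "listprod G xs \<noteq> \<one> \<Longrightarrow> \<exists>s \<in> simples G P \<Delta>. s \<noteq> \<one> \<and> s \<preceq> listprod G xs"
    using xs(1)
  proof (induction xs)
    case (Cons y ys)
    have y: "y \<in> P" "listprod G ys \<in> P"
      using Cons.prems simples_subset_P listprod_in_P[of ys] by auto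
    then have "y \<preceq> listprod G (y # ys)" by (simp add: le_iff)
    then show ?case using Cons y by (cases "y = \<one>") auto
  qed simp
  then show ?thesis using xs assms(2) by simp
qed

lemma listprod_neq_one: "set xs \<subseteq> P - {\<one>} \<Longrightarrow> xs \<noteq> [] \<Longrightarrow> listprod G xs \<noteq> \<one>"
proof (cases xs)
  case (Cons y ys)
  assume "set xs \<subseteq> P - {\<one>}"
  then have y: "y \<in> P" "y \<noteq> \<one>" and ys: "listprod G ys \<in> P"
    using Cons listprod_in_P[of ys] by auto
  show ?thesis
  proof
    assume "listprod G xs = \<one>"
    then have "inv y \<otimes> (y \<otimes> listprod G ys) = inv y" using Cons y by simp
    then have "inv y \<in> P" using y ys by simp
    then show False using y P_inv_closed_eq_one by blast
  qed
qed simp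

definition P_length :: "'a \<Rightarrow> nat" where
  "P_length x = (GREATEST n. \<exists>xs. set xs \<subseteq> P - {\<one>} \<and> listprod G xs = x \<and> length xs = n)"

lemma P_factorisations_bounded:
  assumes "x \<in> P"
  shows "\<exists>N. \<forall>xs. set xs \<subseteq> P - {\<one>} \<and> listprod G xs = x \<longrightarrow> length xs \<le> N"
proof (cases "x = \<one>")
  case True
  then show ?thesis using listprod_neq_one by (intro exI[of _ 0]) auto
next
  case False
  then show ?thesis using garside assms unfolding garside_structure_def by blast
qed

lemma P_length_attained:
  assumes "x \<in> P"
  shows "\<exists>xs. set xs \<subseteq> P - {\<one>} \<and> listprod G xs = x \<and> length xs = P_length x"
proof -
  obtain N where N: "\<forall>xs. set xs \<subseteq> P - {\<one>} \<and> listprod G xs = x \<longrightarrow> length xs \<le> N"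
    using P_factorisations_bounded[OF assms] by blast
  have "\<exists>xs. set xs \<subseteq> P - {\<one>} \<and> listprod G xs = x \<and> length xs = (if x = \<one> then 0 else 1)"
    using assms by (cases "x = \<one>") (auto intro: exI[of _ "[x]"])
  then show ?thesis
    unfolding P_length_def by (rule GreatestI_nat[where b = N]) (use N in blast)
qed

lemma length_le_P_length:
  assumes "x \<in> P" "set xs \<subseteq> P - {\<one>}" "listprod G xs = x"
  shows "length xs \<le> P_length x"
proof -
  obtain N where N: "\<forall>xs. set xs \<subseteq> P - {\<one>} \<and> listprod G xs = x \<longrightarrow> length xs \<le> N"
    using P_factorisations_bounded[OF assms(1)] by blast
  show ?thesis
    unfolding P_length_def by (rule Greatest_le_nat[where b=N]) (use assms N in auto)
qed

lemma P_length_mult_less: "t \<in> P \<Longrightarrow> t \<noteq> \<one> \<Longrightarrow> y \<in> P \<Longrightarrow> P_length y < P_length (t \<otimes> y)"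
proof -
  assume t: "t \<in> P" "t \<noteq> \<one>" and y: "y \<in> P"
  obtain ys where ys: "set ys \<subseteq> P - {\<one>}" "listprod G ys = y" "length ys = P_length y"
    using P_length_attained[OF y] by blast
  have "length (t # ys) \<le> P_length (t \<otimes> y)"
    using ys t y by (intro length_le_P_length) (auto simp: P_mult_closed)
  then show ?thesis using ys by simp
qed

lemma P_length_eq_0_iff: "x \<in> P \<Longrightarrow> P_length x = 0 \<longleftrightarrow> x = \<one>"
proof -
  assume "x \<in> P"
  then obtain xs where xs: "set xs \<subseteq> P - {\<one>}" "listprod G xs = x" "length xs = P_length x"
    using P_length_attained by blast
  then have "xs = [] \<longleftrightarrow> x = \<one>" using listprod_neq_one by auto
  then show ?thesis using xs(3) by auto
qed

definition nsimples :: "'a set" where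
  "nsimples = simples G P \<Delta> - {\<one>}"

definition adj :: "'a \<Rightarrow> 'a \<Rightarrow> bool" where
  "adj g h \<longleftrightarrow> g \<in> carrier G \<and> h \<in> carrier G \<and>
     (g = h \<or> inv g \<otimes> h \<in> nsimples \<or> inv h \<otimes> g \<in> nsimples)"

definition Delta_close :: "'a \<Rightarrow> 'a \<Rightarrow> bool" where
  "Delta_close g h \<longleftrightarrow> g \<preceq> h \<and> h \<preceq> g \<otimes> \<Delta>"

abbreviation X :: "'a set set" where
  "X \<equiv> Flag G nsimples"

lemma nsimples_in_P: "x \<in> nsimples \<Longrightarrow> x \<in> P"
  using simples_subset_P by (auto simp: nsimples_def)

lemma nsimples_carrier [simp]: "x \<in> nsimples \<Longrightarrow> x \<in> carrier G"
  using nsimples_in_P by simp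

lemma nsimples_le_Delta: "x \<in> nsimples \<Longrightarrow> x \<preceq> \<Delta>"
  by (simp add: nsimples_def mem_simples_iff)

lemma Delta_neq_one: "a \<in> nsimples \<Longrightarrow> \<Delta> \<noteq> \<one>"
proof
  assume a: "a \<in> nsimples" and "\<Delta> = \<one>"
  then have "a = \<one>" using nsimples_le_Delta nsimples_in_P P_le_one_eq by simp
  then show False using a by (simp add: nsimples_def)
qed

lemma cayley_adj_iff:
  assumes g: "g \<in> carrier G" and h: "h \<in> carrier G"
  shows "cayley_adj G nsimples g h \<longleftrightarrow> inv g \<otimes> h \<in> nsimples \<or> inv h \<otimes> g \<in> nsimples"
proof -
  have solve: "y = x \<otimes> s \<longleftrightarrow> s = inv x \<otimes> y"
    if "x \<in> carrier G" "y \<in> carrier G" "s \<in> carrier G" for x y s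
  proof
    assume "y = x \<otimes> s"
    then show "s = inv x \<otimes> y" using that by simp
  next
    assume "s = inv x \<otimes> y"
    then show "y = x \<otimes> s" using that by simp
  qed
  have "cayley_adj G nsimples g h \<longleftrightarrow> (\<exists>s\<in>nsimples. s = inv g \<otimes> h \<or> s = inv h \<otimes> g)"
    unfolding cayley_adj_def using solve[OF g h] solve[OF h g] nsimples_carrier by meson
  then show ?thesis by blast
qed

lemma adj_sym: "adj g h \<Longrightarrow> adj h g"
  and adj_refl: "g \<in> carrier G \<Longrightarrow> adj g g"
  and adj_carrier: "adj g h \<Longrightarrow> g \<in> carrier G" "adj g h \<Longrightarrow> h \<in> carrier G"
  unfolding adj_def by auto

lemma mem_Flag_iff:
  "\<sigma> \<in> X \<longleftrightarrow> finite \<sigma> \<and> \<sigma> \<noteq> {} \<and> \<sigma> \<subseteq> carrier G \<and> (\<forall>g\<in>\<sigma>. \<forall>h\<in>\<sigma>. adj g h)"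
  unfolding Flag_def adj_def using cayley_adj_iff by blast

lemma pair_mem_Flag_iff: "{g, h} \<in> X \<longleftrightarrow> adj g h"
  and triple_mem_Flag_iff: "{u, v, w} \<in> X \<longleftrightarrow> adj u v \<and> adj v w \<and> adj u w"
  unfolding mem_Flag_iff using adj_carrier adj_sym adj_refl by auto

lemma singleton_mem_Flag_iff: "{g} \<in> X \<longleftrightarrow> g \<in> carrier G"
  unfolding mem_Flag_iff using adj_refl by auto

lemma verts_Flag: "verts X = carrier G"
  unfolding verts_def using singleton_mem_Flag_iff mem_Flag_iff by blast

lemma Delta_close_imp_adj:
  assumes "g \<in> carrier G" "h \<in> carrier G" "Delta_close g h"
  shows "adj g h"
proof -
  have "inv (inv g \<otimes> h) \<otimes> \<Delta> = inv h \<otimes> (g \<otimes> \<Delta>)"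
    using assms by (simp add: inv_mult_group m_assoc)
  then have "inv g \<otimes> h \<in> simples G P \<Delta>"
    using assms by (simp add: Delta_close_def le_iff mem_simples_iff)
  then show ?thesis
    using assms inv_mult_eq_one_iff unfolding adj_def nsimples_def by blast
qed

lemma adj_imp_Delta_close: "adj g h \<Longrightarrow> Delta_close g h \<or> Delta_close h g"
proof -
  have close: "Delta_close x y" if "x \<in> carrier G" "y \<in> carrier G" "inv x \<otimes> y \<in> nsimples" for x y
  proof -
    have "inv (inv x \<otimes> y) \<otimes> \<Delta> \<in> P"
      using nsimples_le_Delta[OF that(3)] by (simp only: le_iff)
    moreover have "inv (inv x \<otimes> y) \<otimes> \<Delta> = inv y \<otimes> (x \<otimes> \<Delta>)"
      using that by (simp add: inv_mult_group m_assoc)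
    ultimately show ?thesis
      using that nsimples_in_P unfolding Delta_close_def le_iff by simp
  qed
  assume "adj g h"
  then show ?thesis
    using close by (auto simp: adj_def Delta_close_def le_refl le_mult_Delta)
qed

lemma adj_imp_comparable: "adj u w \<Longrightarrow> u \<preceq> w \<or> w \<preceq> u"
  using adj_imp_Delta_close Delta_close_def by blast

lemma Delta_close_intro:
  "inv x \<otimes> y \<in> P \<Longrightarrow> inv y \<otimes> (x \<otimes> \<Delta>) \<in> P \<Longrightarrow> Delta_close x y"
  by (simp add: Delta_close_def le_iff)

lemma chain_mem_Flag:
  assumes xyz: "x \<in> carrier G" "y \<in> carrier G" "z \<in> carrier G"
    and "x \<preceq> y" "y \<preceq> z" "z \<preceq> x \<otimes> \<Delta>"
  shows "{x, y, z} \<in> X"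
proof -
  have "x \<otimes> \<Delta> \<preceq> y \<otimes> \<Delta>" using assms le_mult_Delta_iff by simp
  then have "Delta_close y z" using assms le_trans[of z "x \<otimes> \<Delta>" "y \<otimes> \<Delta>"]
    by (simp add: Delta_close_def)
  moreover have "Delta_close x z" using assms le_trans[of x y z] by (simp add: Delta_close_def)
  moreover have "Delta_close x y" using assms le_trans[of y z "x \<otimes> \<Delta>"] by (simp add: Delta_close_def)
  ultimately show ?thesis unfolding triple_mem_Flag_iff using Delta_close_imp_adj xyz by blast
qed

lemma adj_mult_left_iff:
  assumes "g \<in> carrier G" "u \<in> carrier G" "w \<in> carrier G"
  shows "adj (g \<otimes> u) (g \<otimes> w) \<longleftrightarrow> adj u w"
proof -
  have "inv (g \<otimes> u) \<otimes> (g \<otimes> w) = inv u \<otimes> w" "inv (g \<otimes> w) \<otimes> (g \<otimes> u) = inv w \<otimes> u"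
    using assms by (simp_all add: inv_mult_group m_assoc)
  then show ?thesis unfolding adj_def using assms by simp
qed

lemma mult_left_mem_Flag: "g \<in> carrier G \<Longrightarrow> \<sigma> \<in> X \<Longrightarrow> (\<lambda>x. g \<otimes> x) ` \<sigma> \<in> X"
  unfolding mem_Flag_iff using adj_mult_left_iff by (auto simp: subset_iff)

lemma edge_path_Flag_iff: "edge_path X p \<longleftrightarrow> p \<noteq> [] \<and> set p \<subseteq> carrier G \<and> successively adj p"
  unfolding edge_path_def verts_Flag pair_mem_Flag_iff successively_iff_nth by blast

lemma simplicial_complex_Flag: "simplicial_complex X"
  unfolding simplicial_complex_def
proof (intro ballI conjI allI impI)
  fix \<sigma> \<tau> assume \<sigma>: "\<sigma> \<in> X" and \<tau>: "\<tau> \<subseteq> \<sigma> \<and> \<tau> \<noteq> {}"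
  then have "finite \<tau>" using finite_subset by (auto simp: mem_Flag_iff)
  then show "\<tau> \<in> X" using \<sigma> \<tau> unfolding mem_Flag_iff by blast
qed (simp_all add: mem_Flag_iff)

subsection \<open>Simple connectivity\<close>

text \<open>Retracting towards an upper bound \<open>h\<close>: a vertex \<open>g \<preceq> h\<close> moves to
  \<open>g\<Delta> \<and> h\<close>, which is adjacent to \<open>g\<close> and strictly closer to \<open>h\<close>. A loop below
  \<open>h\<close> is homotopic to its retraction conjugated by one of its vertices, so induction on the
  maximal distance to \<open>h\<close> contracts it.\<close>

definition retract :: "'a \<Rightarrow> 'a \<Rightarrow> 'a" where
  "retract h g = meetL G P (g \<otimes> \<Delta>) h"

definition depth :: "'a \<Rightarrow> 'a \<Rightarrow> nat" where
  "depth h g = P_length (inv g \<otimes> h)"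

context
  fixes h assumes h: "h \<in> carrier G"
begin

lemma retract_closed [simp]: "g \<in> carrier G \<Longrightarrow> retract h g \<in> carrier G"
  using h by (simp add: retract_def)

lemma retract_le: "g \<in> carrier G \<Longrightarrow> retract h g \<preceq> h"
  and retract_le_mult_Delta: "g \<in> carrier G \<Longrightarrow> retract h g \<preceq> g \<otimes> \<Delta>"
  unfolding retract_def using h meetL_le1 meetL_le2 by simp_all

lemma le_retract: "g \<in> carrier G \<Longrightarrow> g' \<in> carrier G \<Longrightarrow> Delta_close g g' \<Longrightarrow> g' \<preceq> h \<Longrightarrow> g' \<preceq> retract h g"
  unfolding retract_def Delta_close_def using h meetL_greatest by simp

lemma Delta_close_retract: "g \<in> carrier G \<Longrightarrow> g \<preceq> h \<Longrightarrow> Delta_close g (retract h g)"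
  using le_retract[of g g] le_refl le_mult_Delta retract_le_mult_Delta
  unfolding Delta_close_def by simp

lemma adj_retract: "g \<in> carrier G \<Longrightarrow> g \<preceq> h \<Longrightarrow> adj g (retract h g)"
  using Delta_close_imp_adj Delta_close_retract by simp

lemma retract_fixed: "retract h h = h"
  using le_antisym[of h "retract h h"] Delta_close_retract[of h] retract_le[of h] h le_refl
  unfolding Delta_close_def by simp

lemma retract_mono: "g \<in> carrier G \<Longrightarrow> g' \<in> carrier G \<Longrightarrow> Delta_close g g' \<Longrightarrow> retract h g \<preceq> retract h g'"
proof -
  assume g: "g \<in> carrier G" "g' \<in> carrier G" "Delta_close g g'"
  then have "g \<otimes> \<Delta> \<preceq> g' \<otimes> \<Delta>" using le_mult_Delta_iff by (simp add: Delta_close_def)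
  then have "retract h g \<preceq> g' \<otimes> \<Delta>"
    using g retract_le_mult_Delta le_trans[of "retract h g" "g \<otimes> \<Delta>" "g' \<otimes> \<Delta>"] by simp
  then show ?thesis unfolding retract_def using g h meetL_greatest retract_le[of g] by (simp add: retract_def)
qed

lemma retract_step:
  assumes "adj g g'" "g \<preceq> h" "g' \<preceq> h"
  shows "path_equiv X [g, g'] [g, retract h g, retract h g', g'] \<and> adj (retract h g) (retract h g')"
proof -
  have g: "g \<in> carrier G" "g' \<in> carrier G" using assms(1) adj_carrier by auto
  let ?r = "retract h g" and ?r' = "retract h g'"
  from adj_imp_Delta_close[OF assms(1)] show ?thesis
  proof
    assume close: "Delta_close g g'"
    have g'_le: "g' \<preceq> ?r" using le_retract g close assms(3) by simp
    have "{g, ?r, g'} \<in> X"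
      using chain_mem_Flag[OF g retract_closed[OF g(1)]] g'_le retract_le_mult_Delta[OF g(1)] close
      by (simp add: Delta_close_def insert_commute)
    then have "path_equiv X [g, g'] [g, ?r, g']"
      using path_equiv_triangle[of g ?r g' X "[]" "[]"] path_equiv_sym by simp
    moreover have T: "{g', ?r, ?r'} \<in> X"
      using chain_mem_Flag[OF g(2) retract_closed[OF g(1)] retract_closed[OF g(2)] g'_le
        retract_mono[OF g close] retract_le_mult_Delta[OF g(2)]] .
    then have "path_equiv X [g, ?r, g'] [g, ?r, ?r', g']"
      using path_equiv_triangle[of ?r ?r' g' X "[g]" "[]"] path_equiv_sym by (simp add: insert_commute)
    moreover have "adj ?r ?r'" using T by (simp add: triple_mem_Flag_iff)
    ultimately show ?thesis using path_equiv_trans by blast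
  next
    assume close: "Delta_close g' g"
    have g_le: "g \<preceq> ?r'" using le_retract g close assms(2) by simp
    have "{g, ?r', g'} \<in> X"
      using chain_mem_Flag[OF g(2) g(1) retract_closed[OF g(2)]] g_le retract_le_mult_Delta[OF g(2)] close
      by (simp add: Delta_close_def insert_commute)
    then have "path_equiv X [g, g'] [g, ?r', g']"
      using path_equiv_triangle[of g ?r' g' X "[]" "[]"] path_equiv_sym by simp
    moreover have T: "{g, ?r', ?r} \<in> X"
      using chain_mem_Flag[OF g(1) retract_closed[OF g(2)] retract_closed[OF g(1)] g_le
        retract_mono[OF g(2,1) close] retract_le_mult_Delta[OF g(1)]] .
    then have "path_equiv X [g, ?r', g'] [g, ?r, ?r', g']"
      using path_equiv_triangle[of g ?r ?r' X "[]" "[g']"] path_equiv_sym by (simp add: insert_commute)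
    moreover have "adj ?r ?r'" using T by (simp add: triple_mem_Flag_iff adj_sym)
    ultimately show ?thesis using path_equiv_trans by blast
  qed
qed

lemma path_equiv_retract:
  "successively adj (x # xs) \<Longrightarrow> x \<in> carrier G \<Longrightarrow> \<forall>v \<in> set (x # xs). v \<preceq> h \<Longrightarrow>
   path_equiv X (x # xs) (x # map (retract h) (x # xs) @ [last (x # xs)])
   \<and> successively adj (map (retract h) (x # xs))"
proof (induction xs arbitrary: x)
  case Nil
  have "{x, retract h x} \<in> X" using Nil adj_retract by (simp add: pair_mem_Flag_iff)
  then have "path_equiv X ([] @ [x, retract h x, x] @ []) ([] @ [x] @ [])"
    by (rule path_equiv_backtrack)
  then show ?case by (simp add: path_equiv_sym)
next
  case (Cons y ys)
  let ?r = "retract h" and ?l = "last (y # ys)"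
  have xy: "adj x y" and ys: "successively adj (y # ys)" using Cons.prems by auto
  have y: "y \<in> carrier G" using xy adj_carrier by simp
  have IH: "path_equiv X (y # ys) (y # map ?r (y # ys) @ [?l])" "successively adj (map ?r (y # ys))"
    using Cons.IH[OF ys y] Cons.prems by auto
  have step: "path_equiv X [x, y] [x, ?r x, ?r y, y]" "adj (?r x) (?r y)"
    using retract_step[OF xy] Cons.prems by auto
  have "path_equiv X (x # y # ys) (x # ?r x # ?r y # y # ys)"
    using path_equiv_append[OF step(1), of "[]" ys] by simp
  also have "path_equiv X \<dots> (x # ?r x # ?r y # y # ?r y # map ?r ys @ [?l])"
    using path_equiv_append[OF IH(1), of "[x, ?r x, ?r y]" "[]"] by simp
  also have "path_equiv X \<dots> (x # ?r x # ?r y # map ?r ys @ [?l])"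
  proof -
    have "{?r y, y} \<in> X" using adj_retract y Cons.prems by (simp add: pair_mem_Flag_iff adj_sym)
    then show ?thesis
      using path_equiv_backtrack[of "?r y" y X "[x, ?r x]" "map ?r ys @ [?l]"] by simp
  qed
  finally have "path_equiv X (x # y # ys) (x # map ?r (x # y # ys) @ [last (x # y # ys)])"
    by simp
  moreover have "successively adj (map ?r (x # y # ys))" using IH(2) step(2) by simp
  ultimately show ?case by blast
qed

lemma depth_retract_less:
  assumes g: "g \<in> carrier G" "g \<preceq> h" "g \<noteq> h"
  shows "depth h (retract h g) < depth h g"
proof -
  define t where "t = inv g \<otimes> retract h g"
  define y where "y = inv (retract h g) \<otimes> h"
  have t: "t \<in> P" using Delta_close_retract g by (simp add: t_def Delta_close_def le_iff)
  have y: "y \<in> P" using retract_le g by (simp add: y_def le_iff)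
  have "t \<noteq> \<one>"
  proof
    assume "t = \<one>"
    then have fixed: "retract h g = g" using g inv_mult_eq_one_iff by (simp add: t_def)
    have "inv g \<otimes> h \<in> P" "inv g \<otimes> h \<noteq> \<one>" using g h inv_mult_eq_one_iff by (auto simp: le_iff)
    then obtain s where s: "s \<in> simples G P \<Delta>" "s \<noteq> \<one>" "s \<preceq> inv g \<otimes> h"
      using simple_prefix_exists by blast
    then have s': "s \<in> P" "s \<preceq> \<Delta>" by (auto simp: mem_simples_iff)
    have "g \<otimes> s \<preceq> h" using le_mult_left_iff[of g s "inv g \<otimes> h"] g h s s' by simp
    moreover have "g \<otimes> s \<preceq> g \<otimes> \<Delta>" using le_mult_left_iff[of g s \<Delta>] g s' by simp
    ultimately have "g \<otimes> s \<preceq> retract h g"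
      using meetL_greatest g h s' by (simp add: retract_def)
    then have "g \<otimes> s \<preceq> g \<otimes> \<one>" using fixed g by simp
    then have "s \<preceq> \<one>" using le_mult_left_iff[of g s \<one>] g s' by simp
    then show False using P_le_one_eq s s' by simp
  qed
  then have "P_length y < P_length (t \<otimes> y)" using P_length_mult_less t y by simp
  moreover have "t \<otimes> y = inv g \<otimes> h"
    unfolding t_def y_def using g h by (simp add: m_assoc)
  ultimately show ?thesis by (simp add: depth_def y_def)
qed

lemma depth_eq_0_iff: "g \<in> carrier G \<Longrightarrow> g \<preceq> h \<Longrightarrow> depth h g = 0 \<longleftrightarrow> g = h"
  using P_length_eq_0_iff[of "inv g \<otimes> h"] h inv_mult_eq_one_iff by (simp add: depth_def le_iff)

lemma depth_retract_less_bound: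
  assumes "g \<in> carrier G" "g \<preceq> h" "depth h g \<le> n" "0 < n"
  shows "depth h (retract h g) < n"
proof (cases "g = h")
  case True
  have "depth h h = 0" using depth_eq_0_iff[of h] h le_refl by simp
  then show ?thesis using True retract_fixed assms(4) by simp
next
  case False
  then show ?thesis using depth_retract_less assms by fastforce
qed

lemma loop_below_contractible:
  assumes "p \<noteq> []" "successively adj p" "set p \<subseteq> carrier G" "\<forall>v \<in> set p. v \<preceq> h" "last p = hd p"
  shows "path_equiv X p [hd p]"
  using assms
proof (induction "Max (depth h ` set p)" arbitrary: p rule: less_induct)
  case less
  obtain x xs where p: "p = x # xs" using less.prems(1) by (cases p) auto
  show ?case
  proof (cases "set p \<subseteq> {h}")
    case True
    then have "x = h" "set xs \<subseteq> {h}" using p by auto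
    then show ?thesis using path_equiv_constant[of xs h X] p by simp
  next
    case False
    then obtain w where w: "w \<in> set p" "w \<noteq> h" by blast
    have depth_le: "depth h v \<le> Max (depth h ` set p)" if "v \<in> set p" for v
      using that by (intro Max_ge) auto
    have "0 < depth h w" using depth_eq_0_iff w less.prems(3,4) by blast
    then have pos: "0 < Max (depth h ` set p)" using depth_le[OF w(1)] by simp
    define q where "q = map (retract h) p"
    have H: "path_equiv X p (x # q @ [x])" "successively adj q"
      using path_equiv_retract[of x xs] less.prems p by (auto simp: q_def)
    have "depth h (retract h v) < Max (depth h ` set p)" if "v \<in> set p" for v
      using depth_retract_less_bound depth_le[OF that] pos that less.prems(3,4) by blast
    then have smaller: "Max (depth h ` set q) < Max (depth h ` set p)"
      using p by (simp add: q_def Max_less_iff)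
    have "q \<noteq> []" "set q \<subseteq> carrier G" "\<forall>v \<in> set q. v \<preceq> h" "last q = hd q"
      using less.prems p retract_le by (auto simp: q_def last_map hd_map)
    then have "path_equiv X q [hd q]" using less.hyps[OF smaller _ H(2)] by blast
    have "{x, retract h x} \<in> X"
      using adj_retract less.prems p by (simp add: pair_mem_Flag_iff)
    then have backtrack: "path_equiv X [x, retract h x, x] [x]"
      using path_equiv_backtrack[of x "retract h x" X "[]" "[]"] by simp
    note H(1)
    also have "path_equiv X (x # q @ [x]) [x, retract h x, x]"
      using path_equiv_append[OF \<open>path_equiv X q [hd q]\<close>, of "[x]" "[x]"] p by (simp add: q_def)
    also note backtrack
    finally show ?thesis using p by simp
  qed
qed

end

lemma upper_bound_exists: "set p \<subseteq> carrier G \<Longrightarrow> \<exists>h \<in> carrier G. \<forall>v \<in> set p. v \<preceq> h"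
proof (induction p)
  case Nil
  then show ?case by auto
next
  case (Cons x xs)
  then obtain h where h: "h \<in> carrier G" "\<forall>v \<in> set xs. v \<preceq> h" by auto
  have "v \<preceq> joinL x h" if "v \<in> set (x # xs)" for v
    using that Cons.prems h joinL_ge1 joinL_ge2 le_trans[of v h "joinL x h"] by auto
  then show ?case using Cons.prems h by (intro bexI[of _ "joinL x h"]) auto
qed

lemma path_up:
  assumes "h \<in> carrier G" "u \<in> carrier G" "u \<preceq> h"
  shows "\<exists>p. edge_path X p \<and> hd p = u \<and> last p = h"
  using assms(2,3)
proof (induction "depth h u" arbitrary: u rule: less_induct)
  case less
  show ?case
  proof (cases "u = h")
    case True
    then show ?thesis using assms(1) by (intro exI[of _ "[h]"]) (simp add: edge_path_Flag_iff)
  next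
    case False
    then obtain p where p: "edge_path X p" "hd p = retract h u" "last p = h"
      using less depth_retract_less[OF assms(1)] retract_closed[OF assms(1)] retract_le[OF assms(1)]
      by blast
    then have "edge_path X (u # p)"
      using adj_retract[OF assms(1)] less.prems by (cases p) (auto simp: edge_path_Flag_iff)
    then show ?thesis using p by (intro exI[of _ "u # p"]) (auto simp: edge_path_Flag_iff)
  qed
qed

lemma simply_connected_Flag: "simply_connected_complex X"
  unfolding simply_connected_complex_def connected_complex_def verts_Flag
proof (intro conjI ballI allI impI)
  show "carrier G \<noteq> {}" by auto
next
  fix u v assume uv: "u \<in> carrier G" "v \<in> carrier G"
  obtain p where p: "edge_path X p" "hd p = u" "last p = joinL u v"
    using path_up uv joinL_ge1 by (metis joinL_closed)
  obtain q where q: "edge_path X q" "hd q = v" "last q = joinL u v"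
    using path_up uv joinL_ge2 by (metis joinL_closed)
  have "successively adj (rev q)"
    using q(1) by (simp add: edge_path_Flag_iff) (auto elim: successively_mono intro: adj_sym)
  then have "edge_path X (p @ rev q)"
    using p q uv adj_refl by (auto simp: edge_path_Flag_iff successively_append_iff hd_rev)
  moreover have "hd (p @ rev q) = u" "last (p @ rev q) = v"
    using p q by (auto simp: edge_path_Flag_iff last_rev)
  ultimately show "\<exists>p. edge_path X p \<and> hd p = u \<and> last p = v" by blast
next
  fix p assume "edge_path X p \<and> hd p = last p"
  then have p: "p \<noteq> []" "set p \<subseteq> carrier G" "successively adj p" "last p = hd p"
    by (auto simp: edge_path_Flag_iff)
  obtain h where "h \<in> carrier G" "\<forall>v \<in> set p. v \<preceq> h" using upper_bound_exists p by blast
  then show "path_equiv X p [hd p]" using loop_below_contractible p by blast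
qed

lemma pair_mem_link_iff: "{u, w} \<in> link X g \<longleftrightarrow> u \<noteq> g \<and> w \<noteq> g \<and> adj u w \<and> adj g u \<and> adj g w"
  unfolding link_def using pair_mem_Flag_iff triple_mem_Flag_iff[of g u w] by auto

lemma is_edge_link_iff:
  "is_edge (link X g) u w \<longleftrightarrow> u \<noteq> w \<and> u \<noteq> g \<and> w \<noteq> g \<and> adj u w \<and> adj g u \<and> adj g w"
  unfolding is_edge_def pair_mem_link_iff by auto

lemma verts_link_imp_adj: "u \<in> verts (link X g) \<Longrightarrow> adj g u \<and> u \<noteq> g"
  unfolding verts_def link_def mem_Flag_iff by auto

lemma flag_complex_prop_link: "flag_complex_prop (link X g)"
  unfolding flag_complex_prop_def
proof (intro allI impI)
  fix \<sigma> assume \<sigma>: "finite \<sigma> \<and> \<sigma> \<noteq> {} \<and> \<sigma> \<subseteq> verts (link X g) \<and>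
     (\<forall>u\<in>\<sigma>. \<forall>v\<in>\<sigma>. u \<noteq> v \<longrightarrow> is_edge (link X g) u v)"
  have g_adj: "adj g u" "u \<noteq> g" if "u \<in> \<sigma>" for u
    using \<sigma> that verts_link_imp_adj by blast+
  then have carrier: "insert g \<sigma> \<subseteq> carrier G" using \<sigma> adj_carrier by blast
  have "adj u v" if "u \<in> insert g \<sigma>" "v \<in> insert g \<sigma>" for u v
  proof (cases "u = v")
    case True
    then show ?thesis using that carrier adj_refl by blast
  next
    case False
    then show ?thesis using that \<sigma> g_adj adj_sym is_edge_link_iff by auto
  qed
  then have "\<sigma> \<in> X" "insert g \<sigma> \<in> X" using \<sigma> carrier unfolding mem_Flag_iff by auto
  then show "\<sigma> \<in> link X g" using g_adj unfolding link_def by blast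
qed

lemma map_complex_mult_left_Flag:
  assumes g: "g \<in> carrier G"
  shows "map_complex (\<lambda>x. g \<otimes> x) X = X"
proof
  show "map_complex (\<lambda>x. g \<otimes> x) X \<subseteq> X"
    using mult_left_mem_Flag g by (auto simp: map_complex_def)
  show "X \<subseteq> map_complex (\<lambda>x. g \<otimes> x) X"
  proof
    fix \<sigma> assume \<sigma>: "\<sigma> \<in> X"
    then have "\<sigma> = (\<lambda>x. g \<otimes> x) ` ((\<lambda>x. inv g \<otimes> x) ` \<sigma>)"
      using g by (force simp: image_image mem_Flag_iff)
    moreover have "(\<lambda>x. inv g \<otimes> x) ` \<sigma> \<in> X" using mult_left_mem_Flag g \<sigma> by simp
    ultimately show "\<sigma> \<in> map_complex (\<lambda>x. g \<otimes> x) X" unfolding map_complex_def by blast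
  qed
qed

lemma link_eq_map_complex_link_one:
  assumes g: "g \<in> carrier G"
  shows "link X g = map_complex (\<lambda>x. g \<otimes> x) (link X \<one>)"
proof -
  have "inj_on (\<lambda>x. g \<otimes> x) (verts X)" using g by (auto simp: verts_Flag inj_on_def)
  from link_map_complex[OF this, of \<one>] show ?thesis
    using g map_complex_mult_left_Flag[OF g] by (simp add: verts_Flag)
qed

lemma not_six_large_link_if_square:
  assumes "adj g u0" "adj g u1" "adj g u2" "adj g u3"
    and "adj u0 u1" "adj u1 u2" "adj u2 u3" "adj u3 u0"
    and "\<not> adj u0 u2" "\<not> adj u1 u3"
  shows "\<not> six_large (link X g)"
proof -
  have ne: "u0 \<noteq> u1" "u1 \<noteq> u2" "u2 \<noteq> u3" "u3 \<noteq> u0" "u0 \<noteq> u2" "u1 \<noteq> u3"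
    "u0 \<noteq> g" "u1 \<noteq> g" "u2 \<noteq> g" "u3 \<noteq> g"
    using assms adj_sym adj_carrier adj_refl by metis+
  show ?thesis
  proof (rule not_six_large_if_induced_square)
    show "distinct [u0, u1, u2, u3]" using ne by auto
    show "is_edge (link X g) u0 u1" "is_edge (link X g) u1 u2" "is_edge (link X g) u2 u3"
      "is_edge (link X g) u3 u0"
      using assms ne by (simp_all add: is_edge_link_iff)
    show "\<not> is_edge (link X g) u0 u2" "\<not> is_edge (link X g) u1 u3"
      using assms by (simp_all add: is_edge_link_iff)
  qed
qed

subsection \<open>Links are 6-large under the meet condition\<close>

definition meet_condition :: bool where
  "meet_condition \<longleftrightarrow>
     (\<forall>a\<in>nsimples. \<forall>b\<in>nsimples. meetL G P a b \<in> {\<one>, a, b} \<and> meetR G P a b \<in> {\<one>, a, b})"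

text \<open>A neighbour \<open>x\<close> of the identity is a non-trivial simple or the inverse of one, and
  then \<open>x\<Delta>\<close> is simple. Between neighbours, adjacency is comparability for the following
  order, which puts the negative neighbours below the positive ones.\<close>

definition nbrs :: "'a set" where
  "nbrs = {x. adj \<one> x \<and> x \<noteq> \<one>}"

definition to_simple :: "'a \<Rightarrow> 'a" where
  "to_simple x = (if x \<in> P then x else x \<otimes> \<Delta>)"

definition nbr_less :: "'a \<Rightarrow> 'a \<Rightarrow> bool" where
  "nbr_less x y \<longleftrightarrow> x \<noteq> y \<and> to_simple x \<preceq> to_simple y \<and> (y \<in> P \<longrightarrow> x \<in> P)"

lemma nbrs_cases: "x \<in> nbrs \<Longrightarrow> (x \<in> P \<and> x \<in> nsimples) \<or> (x \<notin> P \<and> inv x \<in> nsimples)"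
proof -
  assume "x \<in> nbrs"
  then have x: "x \<in> carrier G" "x \<noteq> \<one>" "x \<in> nsimples \<or> inv x \<in> nsimples"
    unfolding nbrs_def adj_def by auto
  show ?thesis
  proof (cases "x \<in> nsimples")
    case False
    then have "inv x \<in> nsimples" using x by simp
    moreover have "x \<notin> P" using P_inv_closed_eq_one x nsimples_in_P[OF \<open>inv x \<in> nsimples\<close>] by auto
    ultimately show ?thesis by simp
  qed (simp add: nsimples_in_P)
qed

lemma nbrs_carrier: "x \<in> nbrs \<Longrightarrow> x \<in> carrier G"
  unfolding nbrs_def adj_def by simp

lemma nbrs_P: "x \<in> nbrs \<Longrightarrow> x \<in> P \<Longrightarrow> x \<in> nsimples \<and> to_simple x = x"
  and nbrs_not_P: "x \<in> nbrs \<Longrightarrow> x \<notin> P \<Longrightarrow> inv x \<in> nsimples \<and> to_simple x = x \<otimes> \<Delta>"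
  using nbrs_cases by (auto simp: to_simple_def)

lemma to_simple_closed: "x \<in> carrier G \<Longrightarrow> to_simple x \<in> carrier G"
  by (simp add: to_simple_def)

lemma to_simple_simple: "x \<in> nbrs \<Longrightarrow> to_simple x \<in> simples G P \<Delta>"
proof (cases "x \<in> P")
  case False
  assume x: "x \<in> nbrs"
  then have "rcompl (inv x) \<in> simples G P \<Delta>"
    using False nbrs_not_P rcompl_simple by (simp add: nsimples_def)
  then show ?thesis using False nbrs_carrier[OF x] by (simp add: to_simple_def rcompl_def)
qed (use nbrs_P in \<open>auto simp: to_simple_def nsimples_def\<close>)

lemma Delta_close_positive_nbrs:
  assumes "u \<in> P" "w \<in> nbrs" "w \<in> P"
  shows "Delta_close u w \<longleftrightarrow> u \<preceq> w"
proof -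
  have "w \<preceq> \<Delta>" using nbrs_P assms(2,3) nsimples_le_Delta by blast
  then show ?thesis
    using assms Delta_le_mult_Delta le_trans[of w \<Delta> "u \<otimes> \<Delta>"] nbrs_carrier
    unfolding Delta_close_def by auto
qed

lemma Delta_close_negative_nbrs:
  assumes "u \<in> nbrs" "w \<in> nbrs" "u \<notin> P" "w \<notin> P"
  shows "Delta_close u w \<longleftrightarrow> u \<preceq> w"
proof -
  have uw: "u \<in> carrier G" "w \<in> carrier G" using assms nbrs_carrier by auto
  have "w \<preceq> \<one>" using nbrs_not_P assms nsimples_in_P le_one_iff uw by auto
  moreover have "\<one> \<preceq> u \<otimes> \<Delta>"
    using to_simple_simple[OF assms(1)] assms uw by (simp add: to_simple_def mem_simples_iff one_le_iff)
  ultimately show ?thesis using le_trans[of w \<one> "u \<otimes> \<Delta>"] uw unfolding Delta_close_def by auto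
qed

lemma Delta_close_mixed_nbrs:
  assumes "u \<in> nbrs" "w \<in> nbrs" "u \<notin> P" "w \<in> P"
  shows "(Delta_close u w \<longleftrightarrow> w \<preceq> u \<otimes> \<Delta>) \<and> \<not> Delta_close w u"
proof -
  have uw: "u \<in> carrier G" "w \<in> carrier G" using assms nbrs_carrier by auto
  have u1: "u \<preceq> \<one>" using nbrs_not_P assms nsimples_in_P le_one_iff uw by auto
  moreover have "\<one> \<preceq> w" using assms uw one_le_iff by simp
  ultimately have "u \<preceq> w" using le_trans[of u \<one> w] uw by simp
  moreover have "\<not> w \<preceq> u"
  proof
    assume "w \<preceq> u"
    then have "w = \<one>" using u1 le_trans[of w u \<one>] uw P_le_one_eq assms by simp
    then show False using assms(2) by (simp add: nbrs_def)
  qed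
  ultimately show ?thesis unfolding Delta_close_def by simp
qed

lemma adj_nbrs_iff:
  assumes x: "x \<in> nbrs" and y: "y \<in> nbrs" and "x \<noteq> y"
  shows "adj x y \<longleftrightarrow> nbr_less x y \<or> nbr_less y x"
proof -
  have xy: "x \<in> carrier G" "y \<in> carrier G" using x y nbrs_carrier by auto
  have adj_iff: "adj x y \<longleftrightarrow> Delta_close x y \<or> Delta_close y x"
    using Delta_close_imp_adj adj_imp_Delta_close adj_sym xy by blast
  show ?thesis
  proof (cases "x \<in> P"; cases "y \<in> P")
    assume "x \<in> P" "y \<in> P"
    then show ?thesis
      using adj_iff Delta_close_positive_nbrs x y assms(3) by (simp add: nbr_less_def to_simple_def)
  next
    assume "x \<in> P" "y \<notin> P"
    then show ?thesis
      using adj_iff Delta_close_mixed_nbrs[OF y x] assms(3) by (auto simp: nbr_less_def to_simple_def)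
  next
    assume "x \<notin> P" "y \<in> P"
    then show ?thesis
      using adj_iff Delta_close_mixed_nbrs[OF x y] assms(3) by (auto simp: nbr_less_def to_simple_def)
  next
    assume "x \<notin> P" "y \<notin> P"
    then show ?thesis
      using adj_iff Delta_close_negative_nbrs[OF x y] Delta_close_negative_nbrs[OF y x] assms(3)
        le_mult_Delta_iff xy
      by (simp add: nbr_less_def to_simple_def)
  qed
qed

lemma is_edge_link_one_iff:
  "is_edge (link X \<one>) u w \<longleftrightarrow> u \<in> nbrs \<and> w \<in> nbrs \<and> u \<noteq> w \<and> (nbr_less u w \<or> nbr_less w u)"
proof -
  have "is_edge (link X \<one>) u w \<longleftrightarrow> u \<in> nbrs \<and> w \<in> nbrs \<and> u \<noteq> w \<and> adj u w"
    by (auto simp: is_edge_link_iff nbrs_def)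
  then show ?thesis using adj_nbrs_iff by blast
qed

lemma nbr_less_trans:
  assumes xyz: "x \<in> carrier G" "y \<in> carrier G" "z \<in> carrier G" and xy: "nbr_less x y" and yz: "nbr_less y z"
  shows "nbr_less x z"
proof -
  have le: "to_simple x \<preceq> to_simple y" "to_simple y \<preceq> to_simple z"
    using xy yz by (auto simp: nbr_less_def)
  have "to_simple x \<preceq> to_simple z"
    using le_trans[OF to_simple_closed to_simple_closed to_simple_closed le] xyz by simp
  moreover have "z \<in> P \<longrightarrow> x \<in> P" using xy yz by (auto simp: nbr_less_def)
  moreover have "x \<noteq> z"
  proof
    assume "x = z"
    then have "to_simple y \<preceq> to_simple x" using le by simp
    then have "to_simple x = to_simple y" using le_antisym[OF to_simple_closed to_simple_closed] le xyz by blast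
    moreover have "x \<in> P \<longleftrightarrow> y \<in> P" using xy yz \<open>x = z\<close> by (auto simp: nbr_less_def)
    ultimately have "x = y" using xyz by (auto simp: to_simple_def split: if_splits)
    then show False using xy by (simp add: nbr_less_def)
  qed
  ultimately show ?thesis by (simp add: nbr_less_def)
qed

lemma meetL_condition_lower_bound:
  assumes "meet_condition" "a \<in> nsimples" "b \<in> nsimples" "\<not> a \<preceq> b" "\<not> b \<preceq> a"
    and "c \<in> carrier G" "c \<preceq> a" "c \<preceq> b"
  shows "c \<preceq> \<one>"
proof -
  have glb: "is_glb_on (carrier G) (leL G P) a b (meetL G P a b)" using meetL_glb assms by simp
  then have "meetL G P a b \<noteq> a" "meetL G P a b \<noteq> b" using assms unfolding is_glb_on_def by auto
  then have "meetL G P a b = \<one>" using assms unfolding meet_condition_def by blast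
  then show ?thesis using glb assms unfolding is_glb_on_def by auto
qed

lemma meetR_condition_lower_bound:
  assumes "meet_condition" "a \<in> nsimples" "b \<in> nsimples" "\<not> leR G P a b" "\<not> leR G P b a"
    and "c \<in> carrier G" "leR G P c a" "leR G P c b"
  shows "leR G P c \<one>"
proof -
  have glb: "is_glb_on (carrier G) (leR G P) a b (meetR G P a b)" using meetR_glb assms by simp
  then have "meetR G P a b \<noteq> a" "meetR G P a b \<noteq> b" using assms unfolding is_glb_on_def by auto
  then have "meetR G P a b = \<one>" using assms unfolding meet_condition_def by blast
  then show ?thesis using glb assms unfolding is_glb_on_def by auto
qed

text \<open>Apply the condition on suffix meets to the right complements.\<close>

lemma common_upper_simple_eq_Delta:
  assumes C: "meet_condition" and a: "a \<in> nsimples" and c: "c \<in> nsimples"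
    and incomparable: "\<not> a \<preceq> c" "\<not> c \<preceq> a"
    and u: "u \<in> simples G P \<Delta>" "a \<preceq> u" "c \<preceq> u"
  shows "u = \<Delta>"
proof -
  have carrier: "u \<in> carrier G" "a \<in> carrier G" "c \<in> carrier G"
    using u a c simples_subset_P by auto
  have simple: "rcompl a \<in> simples G P \<Delta>" "rcompl c \<in> simples G P \<Delta>" "rcompl u \<in> simples G P \<Delta>"
    using rcompl_simple a c u by (auto simp: nsimples_def)
  then have inP: "rcompl a \<in> P" "rcompl c \<in> P" "rcompl u \<in> P" using simples_subset_P by auto
  have below: "leR G P (rcompl u) (rcompl a)" "leR G P (rcompl u) (rcompl c)"
    using leR_rcompl_iff u carrier by auto
  have incomparableR: "\<not> leR G P (rcompl a) (rcompl c)" "\<not> leR G P (rcompl c) (rcompl a)"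
    using leR_rcompl_iff incomparable carrier by auto
  then have "rcompl a \<noteq> \<one>" "rcompl c \<noteq> \<one>" using inP one_leR_iff carrier by auto
  then have "rcompl a \<in> nsimples" "rcompl c \<in> nsimples" using simple by (auto simp: nsimples_def)
  then have "leR G P (rcompl u) \<one>"
    using meetR_condition_lower_bound[OF C _ _ incomparableR] below carrier by simp
  then have "inv (rcompl u) \<in> P" using leR_one_iff carrier by simp
  then have "rcompl u = \<one>" using P_inv_closed_eq_one inP(3) by blast
  then show "u = \<Delta>" using rcompl_eq_one_iff carrier by simp
qed

lemma nbr_less_P: "nbr_less x y \<Longrightarrow> y \<in> P \<Longrightarrow> x \<in> P"
  by (simp add: nbr_less_def)

lemma nbr_less_same_sign: "x \<noteq> y \<Longrightarrow> (x \<in> P \<longleftrightarrow> y \<in> P) \<Longrightarrow> nbr_less x y \<longleftrightarrow> to_simple x \<preceq> to_simple y"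
  by (auto simp: nbr_less_def)

lemma no_square_nbrs_mixed:
  assumes C: meet_condition and nbrs: "a \<in> nbrs" "b \<in> nbrs" "c \<in> nbrs" "d \<in> nbrs"
    and less: "nbr_less a b" "nbr_less a d" "nbr_less c b" "nbr_less c d"
    and ac: "\<not> nbr_less a c" "\<not> nbr_less c a" "a \<noteq> c"
    and bd: "b \<in> P" "d \<notin> P"
  shows "nbr_less b d"
proof -
  have "a \<in> P" "c \<in> P" using nbr_less_P less(1,3) bd(1) by auto
  then have simple: "a \<in> nsimples" "to_simple a = a" "c \<in> nsimples" "to_simple c = c"
      "b \<in> nsimples" "to_simple b = b"
    using nbrs_P[OF nbrs(1)] nbrs_P[OF nbrs(3)] nbrs_P[OF nbrs(2) bd(1)] by auto
  have incomparable: "\<not> a \<preceq> c" "\<not> c \<preceq> a"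
    using ac nbr_less_same_sign[of a c] nbr_less_same_sign[of c a] \<open>a \<in> P\<close> \<open>c \<in> P\<close> simple by auto
  have le: "a \<preceq> b" "c \<preceq> b" "a \<preceq> to_simple d" "c \<preceq> to_simple d"
    using less simple by (auto simp: nbr_less_def)
  have "b = \<Delta>" "to_simple d = \<Delta>"
    using common_upper_simple_eq_Delta[OF C simple(1,3) incomparable] le simple to_simple_simple nbrs
    by (auto simp: nsimples_def)
  then show "nbr_less b d" using bd simple(6) le_refl[of \<Delta>] by (auto simp: nbr_less_def)
qed

lemma no_square_nbrs_negative:
  assumes C: meet_condition and nbrs: "a \<in> nbrs" "b \<in> nbrs" "c \<in> nbrs" "d \<in> nbrs"
    and less: "nbr_less a b" "nbr_less a d" "nbr_less c b" "nbr_less c d"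
    and ac: "\<not> nbr_less a c" "\<not> nbr_less c a" "a \<noteq> c"
    and bd: "\<not> nbr_less b d" "\<not> nbr_less d b" "b \<noteq> d" "b \<notin> P" "d \<notin> P"
  shows False
proof -
  have carrier: "a \<in> carrier G" "b \<in> carrier G" "c \<in> carrier G" "d \<in> carrier G"
    using nbrs nbrs_carrier by auto
  have simple: "inv b \<in> nsimples" "to_simple b = b \<otimes> \<Delta>" "inv d \<in> nsimples" "to_simple d = d \<otimes> \<Delta>"
    using nbrs_not_P nbrs bd(4,5) by auto
  have incomparable: "\<not> to_simple b \<preceq> to_simple d" "\<not> to_simple d \<preceq> to_simple b"
    using bd nbr_less_same_sign[of b d] nbr_less_same_sign[of d b] bd(4,5) by auto
  have "to_simple b \<in> simples G P \<Delta>" "to_simple d \<in> simples G P \<Delta>"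
    using to_simple_simple nbrs by auto
  moreover from this have "\<one> \<preceq> to_simple b" "\<one> \<preceq> to_simple d"
    using simples_subset_P one_le_iff by auto
  ultimately have "to_simple b \<in> nsimples" "to_simple d \<in> nsimples"
    using incomparable by (auto simp: nsimples_def)
  then have pos_below: False if "x \<in> nbrs" "x \<in> P" "nbr_less x b" "nbr_less x d" for x
  proof -
    have "x \<preceq> to_simple b" "x \<preceq> to_simple d" using that nbrs_P by (auto simp: nbr_less_def)
    then have "x \<preceq> \<one>" using meetL_condition_lower_bound[OF C _ _ incomparable] that nbrs_carrier
      \<open>to_simple b \<in> nsimples\<close> \<open>to_simple d \<in> nsimples\<close> by simp
    then have "x = \<one>" using P_le_one_eq that(2) by simp
    then show False using that(1) by (simp add: nbrs_def)
  qed
  show False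
  proof (cases "a \<in> P \<or> c \<in> P")
    case True
    then show False using pos_below nbrs less by blast
  next
    case False
    then have ac_simple: "inv a \<in> nsimples" "to_simple a = a \<otimes> \<Delta>" "inv c \<in> nsimples" "to_simple c = c \<otimes> \<Delta>"
      using nbrs_not_P nbrs by auto
    have "a \<otimes> \<Delta> \<preceq> b \<otimes> \<Delta>" "c \<otimes> \<Delta> \<preceq> b \<otimes> \<Delta>"
      using less simple ac_simple by (auto simp: nbr_less_def)
    then have "leR G P (inv b) (inv a)" "leR G P (inv b) (inv c)"
      using le_mult_Delta_iff carrier by (auto simp: leR_iff)
    moreover have "\<not> a \<otimes> \<Delta> \<preceq> c \<otimes> \<Delta>" "\<not> c \<otimes> \<Delta> \<preceq> a \<otimes> \<Delta>"
      using ac nbr_less_same_sign[of a c] nbr_less_same_sign[of c a] False ac_simple by auto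
    then have "\<not> leR G P (inv a) (inv c)" "\<not> leR G P (inv c) (inv a)"
      using le_mult_Delta_iff carrier by (auto simp: leR_iff)
    ultimately have "leR G P (inv b) \<one>"
      using meetR_condition_lower_bound[OF C ac_simple(1,3)] carrier by simp
    then show False using leR_one_iff carrier bd(4,5) by simp
  qed
qed

lemma no_square_nbrs:
  assumes C: meet_condition and nbrs: "a \<in> nbrs" "b \<in> nbrs" "c \<in> nbrs" "d \<in> nbrs"
    and less: "nbr_less a b" "nbr_less a d" "nbr_less c b" "nbr_less c d"
    and ac: "\<not> nbr_less a c" "\<not> nbr_less c a" "a \<noteq> c"
    and bd: "\<not> nbr_less b d" "\<not> nbr_less d b" "b \<noteq> d"
  shows False
proof -
  have carrier: "a \<in> carrier G" "b \<in> carrier G" "c \<in> carrier G" "d \<in> carrier G"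
    using nbrs nbrs_carrier by auto
  consider "b \<in> P" "d \<in> P" | "b \<in> P" "d \<notin> P" | "b \<notin> P" "d \<in> P" | "b \<notin> P" "d \<notin> P" by blast
  then show False
  proof cases
    case 1
    then have "a \<in> P" using nbr_less_P less by auto
    then have simple: "a \<in> nsimples" "to_simple a = a" "b \<in> nsimples" "to_simple b = b"
        "d \<in> nsimples" "to_simple d = d"
      using nbrs_P nbrs 1 by auto
    have "\<not> b \<preceq> d" "\<not> d \<preceq> b" using bd nbr_less_same_sign[of b d] nbr_less_same_sign[of d b] 1 simple by auto
    moreover have "a \<preceq> b" "a \<preceq> d" using less simple by (auto simp: nbr_less_def)
    ultimately have "a \<preceq> \<one>" using meetL_condition_lower_bound[OF C simple(3,5)] carrier by simp
    then show False using P_le_one_eq \<open>a \<in> P\<close> simple by (simp add: nsimples_def)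
  next
    case 2
    then show False using no_square_nbrs_mixed[OF C nbrs less ac] bd by simp
  next
    case 3
    then show False using no_square_nbrs_mixed[OF C nbrs(1,4,3,2) less(2,1,4,3) ac] bd by simp
  next
    case 4
    then show False using no_square_nbrs_negative[OF C nbrs less ac bd] by blast
  qed
qed

lemma six_large_link_one:
  assumes "meet_condition"
  shows "six_large (link X \<one>)"
proof (rule six_large_comparability[OF is_edge_link_one_iff])
  show "\<forall>x\<in>nbrs. \<forall>y\<in>nbrs. \<forall>z\<in>nbrs. nbr_less x y \<longrightarrow> nbr_less y z \<longrightarrow> nbr_less x z"
    using nbr_less_trans nbrs_carrier by blast
qed (rule no_square_nbrs[OF assms])

lemma systolic_if_meet_condition:
  assumes "meet_condition"
  shows "systolic_complex X"
  unfolding systolic_complex_def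
proof (intro conjI ballI)
  show "simplicial_complex X" by (rule simplicial_complex_Flag)
  show "simply_connected_complex X" by (rule simply_connected_Flag)
  then show "connected_complex X" by (simp add: simply_connected_complex_def)
  fix g assume "g \<in> verts X"
  then have g: "g \<in> carrier G" by (simp add: verts_Flag)
  have "inj_on (\<lambda>x. g \<otimes> x) (verts (link X \<one>))"
    using g verts_link_subset[of X \<one>] by (auto simp: verts_Flag inj_on_def subset_iff)
  from six_large_map_complex[OF this six_large_link_one[OF assms]]
  show "six_large (link X g)" using link_eq_map_complex_link_one[OF g] by simp
  show "flag_complex_prop (link X g)" by (rule flag_complex_prop_link)
qed

subsection \<open>Non-trivial meets give induced squares in the link of the identity\<close>

lemma is_glb_on_incomparable:
  assumes glb: "is_glb_on A rel a b m" and "a \<in> A" "b \<in> A" "rel a a" "rel b b" "m \<noteq> a" "m \<noteq> b"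
    and antisym: "\<And>x y. x \<in> A \<Longrightarrow> y \<in> A \<Longrightarrow> rel x y \<Longrightarrow> rel y x \<Longrightarrow> x = y"
  shows "\<not> rel a b \<and> \<not> rel b a"
proof (intro conjI notI)
  have m: "m \<in> A" "rel m a" "rel m b" "\<forall>c\<in>A. rel c a \<and> rel c b \<longrightarrow> rel c m"
    using glb unfolding is_glb_on_def by blast+
  assume "rel a b"
  then have "rel a m" using m assms(2,4) by blast
  then show False using antisym[OF m(1) assms(2) m(2)] assms(6) by blast
next
  have m: "m \<in> A" "rel m a" "rel m b" "\<forall>c\<in>A. rel c a \<and> rel c b \<longrightarrow> rel c m"
    using glb unfolding is_glb_on_def by blast+
  assume "rel b a"
  then have "rel b m" using m assms(3,5) by blast
  then show False using antisym[OF m(1) assms(3) m(3)] assms(7) by blast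
qed

lemma adj_square_left:
  assumes y: "y \<in> nsimples" and m: "m \<in> P" "m \<preceq> y"
  defines "x \<equiv> inv m \<otimes> y"
  shows "adj (inv m) x" "adj x \<Delta>" "adj \<one> x"
proof -
  have carrier: "y \<in> carrier G" "m \<in> carrier G" "x \<in> carrier G" using y m by (auto simp: x_def)
  have xP: "x \<in> P" and yD: "inv y \<otimes> \<Delta> \<in> P"
    using m(2) nsimples_le_Delta[OF y] by (simp_all add: x_def le_iff)
  have "inv x \<otimes> \<Delta> = (inv y \<otimes> \<Delta>) \<otimes> (inv \<Delta> \<otimes> m \<otimes> \<Delta>)"
    using carrier by (simp add: x_def inv_mult_group m_assoc)
  then have xD: "inv x \<otimes> \<Delta> \<in> P" using P_mult_closed Delta_conj_in_P_iff m yD carrier by simp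
  have "inv (inv m) \<otimes> x = y" "inv x \<otimes> (inv m \<otimes> \<Delta>) = inv y \<otimes> \<Delta>"
    using carrier by (simp_all add: x_def inv_mult_group m_assoc)
  then have "Delta_close (inv m) x" using Delta_close_intro nsimples_in_P[OF y] yD by simp
  moreover have "inv \<Delta> \<otimes> (x \<otimes> \<Delta>) \<in> P" using Delta_conj_in_P_iff xP by (simp add: m_assoc)
  then have "Delta_close x \<Delta>" using Delta_close_intro xD by simp
  moreover have "Delta_close \<one> x" using Delta_close_intro xP xD carrier by simp
  ultimately show "adj (inv m) x" "adj x \<Delta>" "adj \<one> x"
    using Delta_close_imp_adj carrier by simp_all
qed

lemma adj_square_right:
  assumes y: "y \<in> nsimples" and m: "m \<in> P" "leR G P m y"
  defines "x \<equiv> inv (y \<otimes> inv m)"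
  shows "adj m x" "adj x (inv \<Delta>)" "adj \<one> x"
proof -
  have carrier: "y \<in> carrier G" "m \<in> carrier G" "x \<in> carrier G" using y m by (auto simp: x_def)
  have xP: "inv x \<in> P" and yD: "inv y \<otimes> \<Delta> \<in> P"
    using m(2) nsimples_le_Delta[OF y] carrier by (simp_all add: x_def le_iff leR_def)
  have "x \<otimes> \<Delta> = m \<otimes> (inv y \<otimes> \<Delta>)" using carrier by (simp add: x_def inv_mult_group m_assoc)
  then have xD: "x \<otimes> \<Delta> \<in> P" using P_mult_closed m yD by simp
  have "\<Delta> \<otimes> (x \<otimes> \<Delta>) \<otimes> inv \<Delta> = \<Delta> \<otimes> x" using carrier by (simp add: m_assoc)
  then have Dx: "\<Delta> \<otimes> x \<in> P" using Delta_inv_conj_in_P_iff[of "x \<otimes> \<Delta>"] xD carrier by simp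
  have "inv x \<otimes> m = y" "inv m \<otimes> (x \<otimes> \<Delta>) = inv y \<otimes> \<Delta>"
    using carrier by (simp_all add: x_def inv_mult_group m_assoc)
  then have "Delta_close x m" using Delta_close_intro nsimples_in_P[OF y] yD by simp
  moreover have "Delta_close (inv \<Delta>) x" using Delta_close_intro Dx xP carrier by simp
  moreover have "Delta_close x \<one>" using Delta_close_intro xP xD carrier by simp
  ultimately have "adj x m" "adj (inv \<Delta>) x" "adj x \<one>"
    using Delta_close_imp_adj carrier by simp_all
  then show "adj m x" "adj x (inv \<Delta>)" "adj \<one> x" using adj_sym by blast+
qed

lemma not_six_large_link_one_if_meetL:
  assumes ab: "a \<in> nsimples" "b \<in> nsimples" and m: "meetL G P a b \<notin> {\<one>, a, b}"
  shows "\<not> six_large (link X \<one>)"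
proof -
  let ?m = "meetL G P a b"
  have carrier: "a \<in> carrier G" "b \<in> carrier G" "?m \<in> carrier G" and P: "a \<in> P" "b \<in> P"
    using ab nsimples_in_P by auto
  have glb: "is_glb_on (carrier G) (leL G P) a b ?m" using meetL_glb carrier by simp
  have incomparable: "\<not> a \<preceq> b" "\<not> b \<preceq> a"
    using is_glb_on_incomparable[OF glb] carrier le_refl le_antisym m by blast+
  have "\<one> \<preceq> ?m" using glb P one_le_iff carrier unfolding is_glb_on_def by auto
  then have mP: "?m \<in> P" using one_le_iff carrier by simp
  have mD: "inv ?m \<otimes> \<Delta> \<in> P"
    using le_trans[of ?m a \<Delta>] meetL_le1 nsimples_le_Delta ab carrier by (simp add: le_iff)
  have "Delta_close (inv ?m) \<one>" using Delta_close_intro[of "inv ?m" \<one>] mP mD carrier by simp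
  then have "adj \<one> (inv ?m)" using Delta_close_imp_adj[of "inv ?m" \<one>] adj_sym carrier by blast
  moreover have "adj \<one> \<Delta>"
    using Delta_close_intro[of \<one> \<Delta>] Delta_in_P one_in_P Delta_close_imp_adj by simp
  moreover have "\<not> adj (inv ?m \<otimes> a) (inv ?m \<otimes> b)"
  proof
    assume "adj (inv ?m \<otimes> a) (inv ?m \<otimes> b)"
    then have "inv ?m \<otimes> a \<preceq> inv ?m \<otimes> b \<or> inv ?m \<otimes> b \<preceq> inv ?m \<otimes> a"
      using adj_imp_comparable by simp
    then show False using incomparable le_mult_left_iff carrier by simp
  qed
  moreover have "\<not> adj (inv ?m) \<Delta>"
  proof
    assume "adj (inv ?m) \<Delta>"
    then consider "\<Delta> \<preceq> inv ?m \<otimes> \<Delta>" | "\<Delta> \<preceq> inv ?m"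
      using adj_imp_Delta_close unfolding Delta_close_def by blast
    then show False
    proof cases
      case 1
      then have "\<one> \<preceq> inv ?m" using le_mult_Delta_iff[of \<one> "inv ?m"] carrier by simp
      then have "inv ?m \<in> P" using one_le_iff carrier by simp
      then show ?thesis using P_inv_closed_eq_one[OF mP] m by simp
    next
      case 2
      moreover have "inv ?m \<preceq> \<one>" using mP carrier le_one_iff by simp
      ultimately have "\<Delta> \<preceq> \<one>" using le_trans[of \<Delta> "inv ?m" \<one>] carrier by simp
      then have "\<Delta> = \<one>" using P_le_one_eq Delta_in_P by simp
      then show ?thesis using Delta_neq_one[OF ab(1)] by simp
    qed
  qed
  moreover have "adj (inv ?m) (inv ?m \<otimes> y)" "adj (inv ?m \<otimes> y) \<Delta>" "adj \<one> (inv ?m \<otimes> y)"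
    if "y \<in> {a, b}" for y
    using adj_square_left[of y ?m] that ab mP meetL_le1 meetL_le2 carrier by auto
  ultimately show ?thesis
    using not_six_large_link_if_square[of \<one> "inv ?m" "inv ?m \<otimes> a" \<Delta> "inv ?m \<otimes> b"]
      adj_sym[of "inv ?m \<otimes> b" \<Delta>] adj_sym[of "inv ?m" "inv ?m \<otimes> b"]
    by simp
qed

lemma not_six_large_link_one_if_meetR:
  assumes ab: "a \<in> nsimples" "b \<in> nsimples" and m: "meetR G P a b \<notin> {\<one>, a, b}"
  shows "\<not> six_large (link X \<one>)"
proof -
  let ?m = "meetR G P a b"
  have glb: "is_glb_on (carrier G) (leR G P) a b ?m" using meetR_glb ab by simp
  have carrier: "a \<in> carrier G" "b \<in> carrier G" "?m \<in> carrier G" and P: "a \<in> P" "b \<in> P"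
    using ab nsimples_in_P glb by (auto simp: is_glb_on_def)
  have incomparable: "\<not> leR G P a b" "\<not> leR G P b a"
    using is_glb_on_incomparable[OF glb] carrier leR_refl leR_antisym m by blast+
  have "leR G P \<one> ?m" using glb P one_leR_iff carrier unfolding is_glb_on_def by auto
  then have mP: "?m \<in> P" using one_leR_iff carrier by simp
  have mD: "inv ?m \<otimes> \<Delta> \<in> P"
  proof -
    have "inv ?m \<otimes> \<Delta> = (inv a \<otimes> \<Delta>) \<otimes> (inv \<Delta> \<otimes> (a \<otimes> inv ?m) \<otimes> \<Delta>)"
      using carrier by (simp add: m_assoc)
    moreover have "inv a \<otimes> \<Delta> \<in> P" using nsimples_le_Delta ab by (simp add: le_iff)
    moreover have "a \<otimes> inv ?m \<in> P" using glb unfolding is_glb_on_def leR_def by auto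
    ultimately show ?thesis using P_mult_closed Delta_conj_in_P_iff carrier by simp
  qed
  let ?a = "inv (a \<otimes> inv ?m)" and ?b = "inv (b \<otimes> inv ?m)"
  have "Delta_close \<one> ?m" using Delta_close_intro[of \<one> ?m] mP mD carrier by simp
  then have "adj \<one> ?m" using Delta_close_imp_adj carrier by simp
  moreover have "Delta_close (inv \<Delta>) \<one>" using Delta_close_intro[of "inv \<Delta>" \<one>] Delta_in_P one_in_P by simp
  then have "adj \<one> (inv \<Delta>)" using Delta_close_imp_adj[of "inv \<Delta>" \<one>] adj_sym by simp
  moreover have "\<not> adj ?a ?b"
  proof
    assume "adj ?a ?b"
    then have "?a \<preceq> ?b \<or> ?b \<preceq> ?a" using adj_imp_comparable by blast
    moreover have "?a \<preceq> ?b \<longleftrightarrow> leR G P b a" "?b \<preceq> ?a \<longleftrightarrow> leR G P a b"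
      using carrier by (simp_all add: le_iff leR_def inv_mult_group m_assoc)
    ultimately show False using incomparable by blast
  qed
  moreover have "\<not> adj ?m (inv \<Delta>)"
  proof
    assume "adj ?m (inv \<Delta>)"
    then consider "?m \<preceq> inv \<Delta>" | "?m \<preceq> inv \<Delta> \<otimes> \<Delta>"
      using adj_imp_Delta_close unfolding Delta_close_def by blast
    then have "?m \<preceq> \<one>"
    proof cases
      case 1
      moreover have "inv \<Delta> \<preceq> \<one>" using Delta_in_P le_one_iff by simp
      ultimately show ?thesis using le_trans[of ?m "inv \<Delta>" \<one>] carrier by simp
    qed simp
    then show False using P_le_one_eq mP m by simp
  qed
  moreover have "adj ?m (inv (y \<otimes> inv ?m))" "adj (inv (y \<otimes> inv ?m)) (inv \<Delta>)" "adj \<one> (inv (y \<otimes> inv ?m))"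
    if "y \<in> {a, b}" for y
    using adj_square_right[of y ?m] that ab mP glb by (auto simp: is_glb_on_def)
  ultimately show ?thesis
    using not_six_large_link_if_square[of \<one> ?m ?a "inv \<Delta>" ?b]
      adj_sym[of ?b "inv \<Delta>"] adj_sym[of ?m ?b]
    by simp
qed

lemma meet_condition_if_six_large_link_one:
  assumes "six_large (link X \<one>)"
  shows "meet_condition"
  using assms not_six_large_link_one_if_meetL not_six_large_link_one_if_meetR
  unfolding meet_condition_def by blast

text \<open>Every element is a quotient \<open>p\<inverse>q\<close> of positive elements (take \<open>p\<inverse> = x \<and> \<one>\<close>),
  and the positive elements are products of finitely many simples.\<close>

lemma countable_carrier:
  assumes fin: "finite (simples G P \<Delta>)"
  shows "countable (carrier G)"
proof -
  have "P \<subseteq> listprod G ` lists (simples G P \<Delta>)"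
  proof
    fix x assume "x \<in> P"
    then obtain xs where "set xs \<subseteq> simples G P \<Delta>" "x = listprod G xs"
      using P_generated_by_simples by blast
    then show "x \<in> listprod G ` lists (simples G P \<Delta>)" by (auto simp: in_lists_conv_set)
  qed
  moreover have "countable (listprod G ` lists (simples G P \<Delta>))"
    using fin by (intro countable_image countable_lists countable_finite)
  ultimately have "countable P" by (rule countable_subset)
  have "carrier G \<subseteq> (\<lambda>(p, q). inv p \<otimes> q) ` (P \<times> P)"
  proof
    fix x assume x: "x \<in> carrier G"
    let ?m = "meetL G P \<one> x"
    have "inv ?m \<in> P" "inv ?m \<otimes> x \<in> P"
      using x meetL_le1[of \<one> x] meetL_le2[of \<one> x] by (auto simp: le_iff)
    moreover have "inv (inv ?m) \<otimes> (inv ?m \<otimes> x) = x" using x by simp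
    ultimately show "x \<in> (\<lambda>(p, q). inv p \<otimes> q) ` (P \<times> P)" by force
  qed
  moreover have "countable ((\<lambda>(p, q). inv p \<otimes> q) ` (P \<times> P))" using \<open>countable P\<close> by auto
  ultimately show ?thesis by (rule countable_subset)
qed

lemma Flag_cocompact:
  assumes fin: "finite (simples G P \<Delta>)"
  shows "\<exists>K. finite K \<and> K \<subseteq> X \<and> (\<forall>\<sigma>\<in>X. \<exists>g\<in>carrier G. \<exists>\<tau>\<in>K. \<sigma> \<subseteq> (\<lambda>x. g \<otimes> x) ` \<tau>)"
proof (intro exI conjI ballI)
  let ?K = "{\<tau> \<in> X. \<one> \<in> \<tau>}"
  have "?K \<subseteq> Pow (insert \<one> (nsimples \<union> (\<lambda>x. inv x) ` nsimples))"
  proof (intro subsetI PowI)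
    fix \<tau> u assume "\<tau> \<in> ?K" "u \<in> \<tau>"
    then have "adj \<one> u" by (simp add: mem_Flag_iff)
    then show "u \<in> insert \<one> (nsimples \<union> (\<lambda>x. inv x) ` nsimples)"
      unfolding adj_def by (auto intro: image_eqI[of _ "\<lambda>x. inv x" "inv u"])
  qed
  moreover have "finite nsimples" using fin by (simp add: nsimples_def)
  ultimately show "finite ?K" by (meson finite_Pow_iff finite_Un finite_imageI finite_insert finite_subset)
  show "?K \<subseteq> X" by blast
  fix \<sigma> assume \<sigma>: "\<sigma> \<in> X"
  then obtain w where w: "w \<in> \<sigma>" "w \<in> carrier G" by (auto simp: mem_Flag_iff)
  let ?\<tau> = "(\<lambda>x. inv w \<otimes> x) ` \<sigma>"
  have "?\<tau> \<in> ?K" using mult_left_mem_Flag \<sigma> w by force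
  moreover have "(\<lambda>x. w \<otimes> x) ` ?\<tau> = \<sigma>"
    using \<sigma> w by (simp add: image_image mem_Flag_iff subset_iff cong: image_cong)
  ultimately show "\<exists>g\<in>carrier G. \<exists>\<tau>\<in>?K. \<sigma> \<subseteq> (\<lambda>x. g \<otimes> x) ` \<tau>" using w by blast
qed

lemma geometric_simplicial_action_Flag:
  assumes fin: "finite (simples G P \<Delta>)"
  shows "geometric_simplicial_action G X (\<lambda>g. \<lambda>x \<in> carrier G. g \<otimes> x)"
proof -
  have image: "(\<lambda>x \<in> carrier G. g \<otimes> x) ` \<sigma> = (\<lambda>x. g \<otimes> x) ` \<sigma>" if "\<sigma> \<in> X" for g \<sigma>
    using that by (auto simp: mem_Flag_iff subset_iff)
  have "finite {g \<in> carrier G. (\<lambda>x \<in> carrier G. g \<otimes> x) ` F \<inter> F \<noteq> {}}"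
    if F: "finite F" "F \<subseteq> carrier G" for F
  proof -
    have "{g \<in> carrier G. (\<lambda>x \<in> carrier G. g \<otimes> x) ` F \<inter> F \<noteq> {}} \<subseteq> (\<lambda>(x, y). y \<otimes> inv x) ` (F \<times> F)"
    proof
      fix g assume g: "g \<in> {g \<in> carrier G. (\<lambda>x \<in> carrier G. g \<otimes> x) ` F \<inter> F \<noteq> {}}"
      then obtain x where x: "x \<in> F" "g \<otimes> x \<in> F" using F(2) by (auto simp: subset_iff)
      have "(g \<otimes> x) \<otimes> inv x = g" using g x F(2) by (simp add: m_assoc subset_iff)
      then show "g \<in> (\<lambda>(x, y). y \<otimes> inv x) ` (F \<times> F)"
        by (intro rev_image_eqI[of "(x, g \<otimes> x)"]) (use x in auto)
    qed
    then show ?thesis by (rule finite_subset) (use F(1) in simp)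
  qed
  moreover have "(\<lambda>x \<in> carrier G. g \<otimes> x) ` \<sigma> \<in> X" if "g \<in> carrier G" "\<sigma> \<in> X" for g \<sigma>
    using mult_left_mem_Flag[OF that] image[OF that(2)] by simp
  moreover obtain K where "finite K" "K \<subseteq> X"
    and "\<forall>\<sigma>\<in>X. \<exists>g\<in>carrier G. \<exists>\<tau>\<in>K. \<sigma> \<subseteq> (\<lambda>x. g \<otimes> x) ` \<tau>"
    using Flag_cocompact[OF fin] by blast
  then have "\<exists>K. finite K \<and> K \<subseteq> X \<and>
      (\<forall>\<sigma>\<in>X. \<exists>g\<in>carrier G. \<exists>\<tau>\<in>K. \<sigma> \<subseteq> (\<lambda>x \<in> carrier G. g \<otimes> x) ` \<tau>)"
    using image by (metis subsetD)
  ultimately show ?thesis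
    unfolding geometric_simplicial_action_def verts_Flag using group_action_mult_left by blast
qed

theorem systolic_group_if_systolic_Flag:
  assumes fin: "finite (simples G P \<Delta>)" and systolic: "systolic_complex X"
  shows "systolic_group G"
proof -
  obtain f :: "'a \<Rightarrow> nat" where "inj_on f (carrier G)"
    using countable_carrier[OF fin] unfolding countable_def by blast
  then have f: "inj_on f (verts X)" by (simp add: verts_Flag)
  show ?thesis
    unfolding systolic_group_typ_def
    using systolic_complex_map_complex[OF f systolic]
      geometric_simplicial_action_map_complex[OF geometric_simplicial_action_Flag[OF fin] f]
    by blast
qed

theorem systolic_Flag_iff_meet_condition: "systolic_complex X \<longleftrightarrow> meet_condition"
proof
  assume "systolic_complex X"
  then have "six_large (link X \<one>)" unfolding systolic_complex_def verts_Flag by simp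
  then show meet_condition by (rule meet_condition_if_six_large_link_one)
qed (rule systolic_if_meet_condition)

end

theorem mainTheorem9:
  fixes G :: "('a, 'b) monoid_scheme" and P :: "'a set" and \<Delta> :: 'a
  assumes "garside_finite_type G P \<Delta>"
  defines "S \<equiv> simples G P \<Delta> - {\<one>\<^bsub>G\<^esub>}"
  shows "(systolic_complex (Flag G S) \<longleftrightarrow>
           (\<forall>a\<in>S. \<forall>b\<in>S. meetL G P a b \<in> {\<one>\<^bsub>G\<^esub>, a, b} \<and>
                         meetR G P a b \<in> {\<one>\<^bsub>G\<^esub>, a, b}))
       \<and> (systolic_complex (Flag G S) \<longrightarrow> systolic_group G)"
proof -
  have garside: "garside_structure G P \<Delta>" and finite: "finite (simples G P \<Delta>)"
    using assms(1) unfolding garside_finite_type_def by auto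
  interpret garside G P \<Delta> by (rule garside.intro) (fact garside)
  have "S = nsimples" by (simp add: S_def nsimples_def)
  then show ?thesis
    using systolic_Flag_iff_meet_condition systolic_group_if_systolic_Flag[OF finite]
    unfolding meet_condition_def by blast
qed

end
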